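(* Let $N$ be a positive integer and let the mesh $\Omega_N=\{\theta_{N,i}:i=-N,\dots,N\}$ satisfy $\theta_{N,-i}=-\theta_{N,i}$ for $i=1,\dots,N$. For $\lambda\in\mathbb{C}$ let $p_N(\cdot;\lambda)$ be the polynomial of degree at most $2N$ satisfying $p_N(0;\lambda)=1$ and $p_N'(\theta_{N,i};\lambda)=\lambda\,p_N(\theta_{N,i};\lambda)$ for $i\in\{-N,\dots,N\}\setminus\{0\}$. Let $\xi>0$ be such that $\det(D^TD-\xi^2I)\ne0$, and let $\omega\in\mathbb{R}$ be such that $p_N(\cdot;j\omega)$ is uniquely defined and $j\omega I-A_0-\sum_{i=1}^mA_ip_N(-\tau_i;j\omega)$ is nonsingular, so that $G_N(j\omega)=C\left(j\omega I-A_0-\sum_{i=1}^m A_ip_N(-\tau_i;j\omega)\right)^{-1}B+D$ is defined. Then the matrix $\mathcal{L}_\xi^N$ has the eigenvalue $\lambda=j\omega$ if and only if $G_N(j\omega)$ has a singular value equal to $\xi$.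
   Context: Let $n,m,n_u,n_y$ be positive integers, $A_0,\dots,A_m\in\mathbb{R}^{n\times n}$, $B\in\mathbb{R}^{n\times n_u}$, $C\in\mathbb{R}^{n_y\times n}$, $D\in\mathbb{R}^{n_y\times n_u}$, delays $\tau_1,\dots,\tau_m\ge0$, $\tau_{\max}=\max_i\tau_i>0$. For $\xi>0$ put $D_\xi=D^TD-\xi^2I_{n_u}$, $\tilde D_\xi=DD^T-\xi^2I_{n_y}$, and define $2n\times2n$ matrices $M_0=\begin{bmatrix} A_0-BD_\xi^{-1}D^TC & -BD_\xi^{-1}B^T\\ \xi^2 C^T\tilde D_\xi^{-1}C & -A_0^T+C^TDD_\xi^{-1}B^T\end{bmatrix}$, $M_i=\begin{bmatrix}A_i&0\\0&0\end{bmatrix}$, $M_{-i}=\begin{bmatrix}0&0\\0&-A_i^T\end{bmatrix}$, $1\le i\le m$. A mesh $\Omega_N$ consists of $2N+1$ points $-\tau_{\max}\le\theta_{N,-N}<\dots<\theta_{N,0}=0<\dots<\theta_{N,N}\le\tau_{\max}$. Let $X_N=(\mathbb{C}^{2n})^{2N+1}$ with elements $x=(x_{-N},\dots,x_N)$ and let $\mathcal{P}_Nx$ be the unique $\mathbb{C}^{2n}$-valued polynomial of degree $\le2N$ with $\mathcal{P}_Nx(\theta_{N,i})=x_i$. The matrix $\mathcal{L}_\xi^N:X_N\to X_N$ is defined by $(\mathcal{L}_\xi^Nx)_i=(\mathcal{P}_Nx)'(\theta_{N,i})$ for $i\neq0$ and $(\mathcal{L}_\xi^Nx)_0=M_0\mathcal{P}_Nx(0)+\sum_{i=1}^m\left(M_i\mathcal{P}_Nx(-\tau_i)+M_{-i}\mathcal{P}_Nx(\tau_i)\right)$.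 *)

theory Defs
  imports "Jordan_Normal_Form.Schur_Decomposition" "Jordan_Normal_Form.Gauss_Jordan_Elimination"
    "Jordan_Normal_Form.Char_Poly" "HOL-Computational_Algebra.Polynomial"
begin

definition vsum :: "nat \<Rightarrow> (nat \<Rightarrow> 'a::comm_monoid_add vec) \<Rightarrow> nat set \<Rightarrow> 'a vec" where
  "vsum d f I = vec d (\<lambda>k. \<Sum>l\<in>I. f l $ k)"

definition msum :: "nat \<Rightarrow> (nat \<Rightarrow> 'a::comm_monoid_add mat) \<Rightarrow> nat set \<Rightarrow> 'a mat" where
  "msum d f I = mat d d (\<lambda>(r,c). \<Sum>l\<in>I. f l $$ (r,c))"

definition cmat :: "real mat \<Rightarrow> complex mat" where
  "cmat M = map_mat complex_of_real M"

definition minv :: "'a::field mat \<Rightarrow> 'a mat" where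
  "minv M = the (mat_inverse M)"

definition interp_poly :: "(int \<Rightarrow> real) \<Rightarrow> nat \<Rightarrow> (int \<Rightarrow> complex) \<Rightarrow> complex poly" where
  "interp_poly \<theta> N f = (THE q. degree q \<le> 2*N \<and>
      (\<forall>i\<in>{-int N..int N}. poly q (complex_of_real (\<theta> i)) = f i))"

definition PN :: "(int \<Rightarrow> real) \<Rightarrow> nat \<Rightarrow> nat \<Rightarrow> (int \<Rightarrow> complex vec) \<Rightarrow> real \<Rightarrow> complex vec" where
  "PN \<theta> N d x t = vec d (\<lambda>k. poly (interp_poly \<theta> N (\<lambda>i. x i $ k)) (complex_of_real t))"

definition PN_deriv :: "(int \<Rightarrow> real) \<Rightarrow> nat \<Rightarrow> nat \<Rightarrow> (int \<Rightarrow> complex vec) \<Rightarrow> real \<Rightarrow> complex vec" where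
  "PN_deriv \<theta> N d x t = vec d (\<lambda>k. poly (pderiv (interp_poly \<theta> N (\<lambda>i. x i $ k))) (complex_of_real t))"

definition Dxi :: "nat \<Rightarrow> real mat \<Rightarrow> real \<Rightarrow> real mat" where
  "Dxi nu D \<xi> = transpose_mat D * D - (\<xi>^2) \<cdot>\<^sub>m 1\<^sub>m nu"

definition Dtxi :: "nat \<Rightarrow> real mat \<Rightarrow> real \<Rightarrow> real mat" where
  "Dtxi ny D \<xi> = D * transpose_mat D - (\<xi>^2) \<cdot>\<^sub>m 1\<^sub>m ny"

definition M0 :: "nat \<Rightarrow> nat \<Rightarrow> real mat \<Rightarrow> real mat \<Rightarrow> real mat \<Rightarrow> real mat \<Rightarrow> real \<Rightarrow> real mat" where
  "M0 nu ny A0 B C D \<xi> = four_block_mat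
     (A0 - B * minv (Dxi nu D \<xi>) * transpose_mat D * C)
     ((-1) \<cdot>\<^sub>m (B * minv (Dxi nu D \<xi>) * transpose_mat B))
     ((\<xi>^2) \<cdot>\<^sub>m (transpose_mat C * minv (Dtxi ny D \<xi>) * C))
     ((-1) \<cdot>\<^sub>m transpose_mat A0 + transpose_mat C * D * minv (Dxi nu D \<xi>) * transpose_mat B)"

definition Mplus :: "nat \<Rightarrow> real mat \<Rightarrow> real mat" where
  "Mplus n Ai = four_block_mat Ai (0\<^sub>m n n) (0\<^sub>m n n) (0\<^sub>m n n)"

definition Mminus :: "nat \<Rightarrow> real mat \<Rightarrow> real mat" where
  "Mminus n Ai = four_block_mat (0\<^sub>m n n) (0\<^sub>m n n) (0\<^sub>m n n) ((-1) \<cdot>\<^sub>m transpose_mat Ai)"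

definition LN_op :: "nat \<Rightarrow> nat \<Rightarrow> nat \<Rightarrow> nat \<Rightarrow> (nat \<Rightarrow> real mat) \<Rightarrow> real mat \<Rightarrow> real mat \<Rightarrow> real mat
     \<Rightarrow> (nat \<Rightarrow> real) \<Rightarrow> (int \<Rightarrow> real) \<Rightarrow> nat \<Rightarrow> real \<Rightarrow> (int \<Rightarrow> complex vec) \<Rightarrow> int \<Rightarrow> complex vec" where
  "LN_op n m nu ny A B C D \<tau> \<theta> N \<xi> x i =
    (if i = 0 then
       cmat (M0 nu ny (A 0) B C D \<xi>) *\<^sub>v PN \<theta> N (2*n) x 0
       + vsum (2*n) (\<lambda>l. cmat (Mplus n (A l)) *\<^sub>v PN \<theta> N (2*n) x (- \<tau> l)
                        + cmat (Mminus n (A l)) *\<^sub>v PN \<theta> N (2*n) x (\<tau> l)) {1..m}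
     else PN_deriv \<theta> N (2*n) x (\<theta> i))"

(* the matrix of L_xi^N w.r.t. the standard basis of X_N = C^{2n(2N+1)};
   block index i \<in> {-N..N} corresponds to position nat (i + N) *)
definition unflatten :: "nat \<Rightarrow> nat \<Rightarrow> complex vec \<Rightarrow> int \<Rightarrow> complex vec" where
  "unflatten d N v i = vec d (\<lambda>k. v $ (nat (i + int N) * d + k))"

definition LN_mat :: "nat \<Rightarrow> nat \<Rightarrow> nat \<Rightarrow> nat \<Rightarrow> (nat \<Rightarrow> real mat) \<Rightarrow> real mat \<Rightarrow> real mat \<Rightarrow> real mat
     \<Rightarrow> (nat \<Rightarrow> real) \<Rightarrow> (int \<Rightarrow> real) \<Rightarrow> nat \<Rightarrow> real \<Rightarrow> complex mat" where
  "LN_mat n m nu ny A B C D \<tau> \<theta> N \<xi> =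
     (let d = 2*n; K = d * (2*N+1) in
      mat K K (\<lambda>(r,c). LN_op n m nu ny A B C D \<tau> \<theta> N \<xi> (unflatten d N (unit_vec K c))
                          (int (r div d) - int N) $ (r mod d)))"

definition pN_prop :: "(int \<Rightarrow> real) \<Rightarrow> nat \<Rightarrow> complex \<Rightarrow> complex poly \<Rightarrow> bool" where
  "pN_prop \<theta> N lam p \<longleftrightarrow> degree p \<le> 2*N \<and> poly p 0 = 1 \<and>
     (\<forall>i\<in>{-int N..int N} - {0}. poly (pderiv p) (complex_of_real (\<theta> i))
                                  = lam * poly p (complex_of_real (\<theta> i)))"

definition pN :: "(int \<Rightarrow> real) \<Rightarrow> nat \<Rightarrow> complex \<Rightarrow> complex poly" where
  "pN \<theta> N lam = (THE p. pN_prop \<theta> N lam p)"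

definition KN :: "nat \<Rightarrow> nat \<Rightarrow> (nat \<Rightarrow> real mat) \<Rightarrow> (nat \<Rightarrow> real) \<Rightarrow> (int \<Rightarrow> real) \<Rightarrow> nat \<Rightarrow> real \<Rightarrow> complex mat" where
  "KN n m A \<tau> \<theta> N \<omega> = (\<i> * complex_of_real \<omega>) \<cdot>\<^sub>m 1\<^sub>m n - cmat (A 0)
     - msum n (\<lambda>l. poly (pN \<theta> N (\<i> * complex_of_real \<omega>)) (complex_of_real (- \<tau> l)) \<cdot>\<^sub>m cmat (A l)) {1..m}"

definition GN :: "nat \<Rightarrow> nat \<Rightarrow> (nat \<Rightarrow> real mat) \<Rightarrow> real mat \<Rightarrow> real mat \<Rightarrow> real mat
     \<Rightarrow> (nat \<Rightarrow> real) \<Rightarrow> (int \<Rightarrow> real) \<Rightarrow> nat \<Rightarrow> real \<Rightarrow> complex mat" where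
  "GN n m A B C D \<tau> \<theta> N \<omega> = cmat C * minv (KN n m A \<tau> \<theta> N \<omega>) * cmat B + cmat D"

definition singular_value :: "complex mat \<Rightarrow> real \<Rightarrow> bool" where
  "singular_value G s \<longleftrightarrow> s \<ge> 0 \<and> eigenvalue (mat_adjoint G * G) (complex_of_real (s^2))"

end

theory Submission
  imports Defs
begin

text \<open>An eigenvector \<open>x\<close> of \<open>L\<^sub>N\<close> for \<open>\<lambda>\<close> satisfies \<open>x\<^sub>i' = \<lambda> x\<^sub>i\<close> at every node
  \<open>\<theta>\<^sub>i \<noteq> 0\<close>, so by uniqueness of \<open>p\<^sub>N(\<cdot>;\<lambda>)\<close> each component of its interpolant is a multiple of
  \<open>p\<^sub>N\<close>: \<open>x\<^sub>i = p\<^sub>N(\<theta>\<^sub>i;\<lambda>) v\<close> with \<open>v = x\<^sub>0\<close>. The equation at the node \<open>0\<close> then says that \<open>v\<close> is an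
  eigenvector of the \<open>2n \<times> 2n\<close> matrix \<open>M\<^sub>0 + \<Sum>\<^sub>i (p\<^sub>N(-\<tau>\<^sub>i) M\<^sub>i + p\<^sub>N(\<tau>\<^sub>i) M\<^sub>-\<^sub>i)\<close>.
  For \<open>\<lambda> = j\<omega>\<close> and a symmetric mesh, \<open>p\<^sub>N(\<tau>) = conj (p\<^sub>N(-\<tau>))\<close>, and this matrix minus \<open>j\<omega>\<close> is a
  Hamiltonian matrix built from \<open>K = j\<omega> I - A\<^sub>0 - \<Sum>\<^sub>i A\<^sub>i p\<^sub>N(-\<tau>\<^sub>i)\<close>, \<open>B\<close>, \<open>C\<close>, \<open>D\<close>. Writing a kernel
  vector as \<open>(x, y)\<close> and eliminating the input \<open>u = -(D\<^sup>T D - \<xi>\<^sup>2)\<^sup>-\<^sup>1 (D\<^sup>T C x + B\<^sup>T y)\<close> gives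
  \<open>K x = B u\<close>, \<open>K\<^sup>H y = C\<^sup>T (C x + D u)\<close> and \<open>B\<^sup>T y + D\<^sup>T (C x + D u) = \<xi>\<^sup>2 u\<close>, i.e.
  \<open>G\<^sup>H G u = \<xi>\<^sup>2 u\<close> for \<open>G = C K\<^sup>-\<^sup>1 B + D = G\<^sub>N(j\<omega>)\<close>, and conversely.\<close>

lemma mult_mat_vec_zero: "A \<in> carrier_mat nr nc \<Longrightarrow> A *\<^sub>v 0\<^sub>v nc = (0\<^sub>v nr :: 'a :: comm_ring vec)"
  by (intro eq_vecI) (auto simp: scalar_prod_def)

lemma mult_mat_vec_uminus:
  "A \<in> carrier_mat nr nc \<Longrightarrow> v \<in> carrier_vec nc \<Longrightarrow> A *\<^sub>v (- v) = - (A *\<^sub>v (v :: 'a :: comm_ring_1 vec))"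
  by (intro eq_vecI) (auto simp: scalar_prod_def sum_negf)

lemma smult_mult_mat_vec:
  assumes "v \<in> carrier_vec (dim_col M)"
  shows "(a \<cdot>\<^sub>m M) *\<^sub>v v = a \<cdot>\<^sub>v (M *\<^sub>v v)"
  using assms by (intro eq_vecI) (auto simp: scalar_prod_def sum_distrib_left mult.assoc)

lemma assoc_mult_mat_vec3:
  assumes "A \<in> carrier_mat a b" "B \<in> carrier_mat b c" "C \<in> carrier_mat c d" "x \<in> carrier_vec d"
  shows "(A * B * C) *\<^sub>v x = A *\<^sub>v (B *\<^sub>v (C *\<^sub>v x))"
proof -
  have "A * B \<in> carrier_mat a c" "C *\<^sub>v x \<in> carrier_vec c"
    using assms by auto
  then show ?thesis
    using assms by (simp only: assoc_mult_mat_vec)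
qed

lemma assoc_mult_mat_vec4:
  assumes "A \<in> carrier_mat a b" "B \<in> carrier_mat b c" "C \<in> carrier_mat c d" "D \<in> carrier_mat d e"
    "x \<in> carrier_vec e"
  shows "(A * B * C * D) *\<^sub>v x = A *\<^sub>v (B *\<^sub>v (C *\<^sub>v (D *\<^sub>v x)))"
proof -
  have "A * B * C \<in> carrier_mat a d" "D *\<^sub>v x \<in> carrier_vec d"
    using assms by auto
  then show ?thesis
    using assms by (simp only: assoc_mult_mat_vec assoc_mult_mat_vec3)
qed

lemma diff_vec_eq_0_iff:
  "v \<in> carrier_vec n \<Longrightarrow> w \<in> carrier_vec n \<Longrightarrow> v - w = 0\<^sub>v n \<longleftrightarrow> v = (w :: 'a :: ab_group_add vec)"
  by (auto simp: vec_eq_iff)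

lemma append_vec_eq_0_iff:
  "x \<in> carrier_vec n \<Longrightarrow> y \<in> carrier_vec n \<Longrightarrow> x @\<^sub>v y = 0\<^sub>v (2*n) \<longleftrightarrow> x = 0\<^sub>v n \<and> y = (0\<^sub>v n :: 'a :: zero vec)"
proof -
  assume "x \<in> carrier_vec n" "y \<in> carrier_vec n"
  moreover have "0\<^sub>v (2*n) = (0\<^sub>v n @\<^sub>v 0\<^sub>v n :: 'a vec)"
    by (intro eq_vecI) auto
  ultimately show ?thesis
    by simp
qed

lemma dim_vsum [simp]: "dim_vec (vsum d f S) = d"
  unfolding vsum_def by simp

lemma msum_mult_vec:
  assumes "\<forall>l\<in>S. f l \<in> carrier_mat d d" and v: "v \<in> carrier_vec d"
  shows "msum d f S *\<^sub>v v = vsum d (\<lambda>l. f l *\<^sub>v v) S"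
proof (rule eq_vecI)
  fix k assume "k < dim_vec (vsum d (\<lambda>l. f l *\<^sub>v v) S)"
  then have k: "k < d"
    by simp
  have "(msum d f S *\<^sub>v v) $ k = (\<Sum>j\<in>{0..<d}. \<Sum>l\<in>S. f l $$ (k, j) * v $ j)"
    using k v by (simp add: msum_def scalar_prod_def sum_distrib_right)
  also have "\<dots> = (\<Sum>l\<in>S. (f l *\<^sub>v v) $ k)"
    using assms k by (subst sum.swap) (intro sum.cong refl, auto simp: scalar_prod_def)
  finally show "(msum d f S *\<^sub>v v) $ k = vsum d (\<lambda>l. f l *\<^sub>v v) S $ k"
    using k by (simp add: vsum_def)
qed (simp add: msum_def)

lemma minv_inverse:
  assumes A: "(A :: 'a :: field mat) \<in> carrier_mat n n" and "det A \<noteq> 0"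
  shows "A * minv A = 1\<^sub>m n" "minv A * A = 1\<^sub>m n" "minv A \<in> carrier_mat n n"
proof -
  obtain B where B: "mat_inverse A = Some B"
    using mat_inverse(1)[OF A] det_non_zero_imp_unit[OF A \<open>det A \<noteq> 0\<close>] by fastforce
  then show "A * minv A = 1\<^sub>m n" "minv A * A = 1\<^sub>m n" "minv A \<in> carrier_mat n n"
    using mat_inverse(2)[OF A B] unfolding minv_def by auto
qed

lemma mult_inverse_intertwine:
  fixes P Q M P' Q' :: "'a :: comm_ring_1 mat"
  assumes P: "P \<in> carrier_mat a a" and Q: "Q \<in> carrier_mat b b" and M: "M \<in> carrier_mat a b"
    and P': "P' \<in> carrier_mat a a" and Q': "Q' \<in> carrier_mat b b"
    and "P' * P = 1\<^sub>m a" "Q * Q' = 1\<^sub>m b" and PM: "P * M = M * Q"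
  shows "M * Q' = P' * M"
proof -
  have "M * Q' = P' * P * M * Q'"
    using assms(6) left_mult_one_mat[OF M] by simp
  also have "\<dots> = P' * (M * Q) * Q'"
    using P P' M by (simp add: assoc_mult_mat[OF P' P M] PM)
  also have "\<dots> = P' * M * (Q * Q')"
    using P' M Q Q' by (simp add: assoc_mult_mat[of _ a a _ b _ b])
  also have "\<dots> = P' * M"
    using assms(7) right_mult_one_mat[OF mult_carrier_mat[OF P' M]] by simp
  finally show ?thesis .
qed

lemma eigenvalue_mult_swap:
  fixes A B :: "'a :: field mat"
  assumes A: "A \<in> carrier_mat n k" and B: "B \<in> carrier_mat k n" and "c \<noteq> 0"
    and "eigenvalue (A * B) c"
  shows "eigenvalue (B * A) c"
proof -
  obtain v where v: "v \<in> carrier_vec n" "v \<noteq> 0\<^sub>v n" and ABv: "A *\<^sub>v (B *\<^sub>v v) = c \<cdot>\<^sub>v v"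
    using \<open>eigenvalue (A * B) c\<close> A B unfolding eigenvalue_def eigenvector_def by auto
  have Bv: "B *\<^sub>v v \<in> carrier_vec k"
    using B v(1) by simp
  have "B *\<^sub>v v \<noteq> 0\<^sub>v k"
  proof
    assume "B *\<^sub>v v = 0\<^sub>v k"
    then have "c \<cdot>\<^sub>v v = 0\<^sub>v n"
      using A by (simp add: mult_mat_vec_zero flip: ABv)
    then show False
      using v \<open>c \<noteq> 0\<close> by (auto simp: vec_eq_iff)
  qed
  moreover have "(B * A) *\<^sub>v (B *\<^sub>v v) = c \<cdot>\<^sub>v (B *\<^sub>v v)"
    using A B Bv v(1) by (simp add: ABv mult_mat_vec)
  ultimately show ?thesis
    unfolding eigenvalue_def eigenvector_def using A B Bv by auto
qed

lemma dim_mat_adjoint [simp]: "dim_row (mat_adjoint A) = dim_col A" "dim_col (mat_adjoint A) = dim_row A"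
  unfolding mat_adjoint_def by auto

lemma index_mat_adjoint [simp]:
  "i < dim_col A \<Longrightarrow> j < dim_row A \<Longrightarrow> mat_adjoint A $$ (i, j) = conjugate (A $$ (j, i))"
  unfolding mat_adjoint_def by (simp add: mat_of_rows_index)

lemma mat_adjoint_carrier [simp]: "A \<in> carrier_mat a b \<Longrightarrow> mat_adjoint A \<in> carrier_mat b a"
  unfolding carrier_mat_def by simp

lemma mat_adjoint_mult:
  fixes A B :: "complex mat"
  assumes "A \<in> carrier_mat a b" "B \<in> carrier_mat b c"
  shows "mat_adjoint (A * B) = mat_adjoint B * mat_adjoint A"
  using assms by (intro eq_matI) (auto simp: scalar_prod_def mult.commute)

lemma mat_adjoint_add:
  fixes A B :: "complex mat"
  assumes "A \<in> carrier_mat a b" "B \<in> carrier_mat a b"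
  shows "mat_adjoint (A + B) = mat_adjoint A + mat_adjoint B"
  using assms by (intro eq_matI) auto

lemma mat_adjoint_one: "mat_adjoint (1\<^sub>m n :: complex mat) = 1\<^sub>m n"
  by (intro eq_matI) auto

lemma cmat_carrier_iff [simp]: "cmat M \<in> carrier_mat a b \<longleftrightarrow> M \<in> carrier_mat a b"
  unfolding cmat_def carrier_mat_def by auto

lemma dim_cmat [simp]: "dim_row (cmat M) = dim_row M" "dim_col (cmat M) = dim_col M"
  unfolding cmat_def by auto

lemma index_cmat [simp]:
  "i < dim_row M \<Longrightarrow> j < dim_col M \<Longrightarrow> cmat M $$ (i, j) = complex_of_real (M $$ (i, j))"
  unfolding cmat_def by simp

lemma cmat_mult: "A \<in> carrier_mat a b \<Longrightarrow> B \<in> carrier_mat b c \<Longrightarrow> cmat (A * B) = cmat A * cmat B"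
  unfolding cmat_def by (rule of_real_hom.mat_hom_mult)

lemma cmat_mult3:
  "A \<in> carrier_mat a b \<Longrightarrow> B \<in> carrier_mat b c \<Longrightarrow> C \<in> carrier_mat c d \<Longrightarrow>
    cmat (A * B * C) = cmat A * cmat B * cmat C"
  by (simp only: cmat_mult[OF mult_carrier_mat] cmat_mult)

lemma cmat_mult4:
  "A \<in> carrier_mat a b \<Longrightarrow> B \<in> carrier_mat b c \<Longrightarrow> C \<in> carrier_mat c d \<Longrightarrow> D \<in> carrier_mat d e \<Longrightarrow>
    cmat (A * B * C * D) = cmat A * cmat B * cmat C * cmat D"
  by (simp only: cmat_mult[OF mult_carrier_mat[OF mult_carrier_mat]] cmat_mult3)

lemma cmat_add: "A \<in> carrier_mat a b \<Longrightarrow> B \<in> carrier_mat a b \<Longrightarrow> cmat (A + B) = cmat A + cmat B"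
  unfolding cmat_def by (intro eq_matI) auto

lemma cmat_minus: "A \<in> carrier_mat a b \<Longrightarrow> B \<in> carrier_mat a b \<Longrightarrow> cmat (A - B) = cmat A - cmat B"
  unfolding cmat_def by (intro eq_matI) auto

lemma cmat_smult: "cmat (r \<cdot>\<^sub>m A) = complex_of_real r \<cdot>\<^sub>m cmat A"
  unfolding cmat_def by (intro eq_matI) auto

lemma cmat_one: "cmat (1\<^sub>m n) = 1\<^sub>m n"
  unfolding cmat_def by (intro eq_matI) auto

lemma mat_adjoint_cmat: "mat_adjoint (cmat M) = cmat (transpose_mat M)"
  unfolding cmat_def by (intro eq_matI) auto

section \<open>Hamiltonian matrices and singular values\<close>

lemma ex_nonzero_append_vec_iff:
  "(\<exists>v. v \<in> carrier_vec (2*n) \<and> v \<noteq> 0\<^sub>v (2*n) \<and> P v)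
     \<longleftrightarrow> (\<exists>x\<in>carrier_vec n. \<exists>y\<in>carrier_vec n. (x \<noteq> 0\<^sub>v n \<or> y \<noteq> (0\<^sub>v n :: 'a :: zero vec)) \<and> P (x @\<^sub>v y))"
proof
  assume "\<exists>v. v \<in> carrier_vec (2*n) \<and> v \<noteq> 0\<^sub>v (2*n) \<and> P v"
  then obtain v where v: "v \<in> carrier_vec (2*n)" "v \<noteq> 0\<^sub>v (2*n)" "P v"
    by blast
  let ?x = "vec_first v n" and ?y = "vec_last v n"
  have split: "?x @\<^sub>v ?y = v"
    using v(1) by (intro vec_first_last_append) (simp add: mult_2)
  have "?x \<in> carrier_vec n" "?y \<in> carrier_vec n"
    by auto
  moreover have "?x \<noteq> 0\<^sub>v n \<or> ?y \<noteq> 0\<^sub>v n"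
    using v(2) append_vec_eq_0_iff[OF calculation] split by auto
  ultimately show "\<exists>x\<in>carrier_vec n. \<exists>y\<in>carrier_vec n. (x \<noteq> 0\<^sub>v n \<or> y \<noteq> 0\<^sub>v n) \<and> P (x @\<^sub>v y)"
    using v(3) split by metis
next
  assume "\<exists>x\<in>carrier_vec n. \<exists>y\<in>carrier_vec n. (x \<noteq> 0\<^sub>v n \<or> y \<noteq> 0\<^sub>v n) \<and> P (x @\<^sub>v y)"
  then obtain x y where "x \<in> carrier_vec n" "y \<in> carrier_vec n" "x \<noteq> 0\<^sub>v n \<or> y \<noteq> 0\<^sub>v n" "P (x @\<^sub>v y)"
    by blast
  moreover from calculation(1,2) have "x @\<^sub>v y \<in> carrier_vec (2*n)"
    by (simp add: mult_2)
  ultimately show "\<exists>v. v \<in> carrier_vec (2*n) \<and> v \<noteq> 0\<^sub>v (2*n) \<and> P v"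
    using append_vec_eq_0_iff by blast
qed

lemma mat_adjoint_inverse:
  fixes K Ki :: "complex mat"
  assumes "K \<in> carrier_mat n n" "Ki \<in> carrier_mat n n" "K * Ki = 1\<^sub>m n"
  shows "mat_adjoint Ki * mat_adjoint K = 1\<^sub>m n"
  unfolding mat_adjoint_mult[OF assms(1,2), symmetric] assms(3) by (rule mat_adjoint_one)

lemma shifted_gram_eq_iff:
  fixes D X :: "complex mat"
  assumes D: "D \<in> carrier_mat ny nu" and X: "X \<in> carrier_mat nu nu"
    and XDx: "X * (mat_adjoint D * D - s \<cdot>\<^sub>m 1\<^sub>m nu) = 1\<^sub>m nu"
    and DxX: "(mat_adjoint D * D - s \<cdot>\<^sub>m 1\<^sub>m nu) * X = 1\<^sub>m nu"
    and w: "w \<in> carrier_vec nu" and v: "v \<in> carrier_vec nu"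
  shows "w + mat_adjoint D *\<^sub>v (D *\<^sub>v v) = s \<cdot>\<^sub>v v \<longleftrightarrow> v = - (X *\<^sub>v w)"
proof -
  let ?Dx = "mat_adjoint D * D - s \<cdot>\<^sub>m 1\<^sub>m nu"
  have aD: "mat_adjoint D \<in> carrier_mat nu ny" and Dx: "?Dx \<in> carrier_mat nu nu"
    using D by auto
  have Dx_v: "?Dx *\<^sub>v v = mat_adjoint D *\<^sub>v (D *\<^sub>v v) - s \<cdot>\<^sub>v v"
    using v mult_carrier_mat[OF aD D] assoc_mult_mat_vec[OF aD D v]
    by (simp add: minus_mult_distrib_mat_vec[of _ nu nu] smult_mult_mat_vec)
  have "mat_adjoint D *\<^sub>v (D *\<^sub>v v) \<in> carrier_vec nu"
    using mult_mat_vec_carrier[OF aD mult_mat_vec_carrier[OF D v]] .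
  then have "w + mat_adjoint D *\<^sub>v (D *\<^sub>v v) = s \<cdot>\<^sub>v v \<longleftrightarrow> ?Dx *\<^sub>v v = - w"
    unfolding Dx_v using v w D by (auto simp: vec_eq_iff algebra_simps)
  also have "\<dots> \<longleftrightarrow> v = - (X *\<^sub>v w)"
  proof
    assume "?Dx *\<^sub>v v = - w"
    then have "X *\<^sub>v (?Dx *\<^sub>v v) = - (X *\<^sub>v w)"
      using X w by (simp add: mult_mat_vec_uminus)
    then show "v = - (X *\<^sub>v w)"
      using X Dx v XDx by (simp add: assoc_mult_mat_vec[symmetric, of _ nu nu])
  next
    assume "v = - (X *\<^sub>v w)"
    then show "?Dx *\<^sub>v v = - w"
      using X Dx w DxX by (simp add: mult_mat_vec_uminus assoc_mult_mat_vec[symmetric, of _ nu nu])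
  qed
  finally show ?thesis .
qed

lemma hamiltonian_top_row:
  fixes K B C D X :: "complex mat"
  assumes K: "K \<in> carrier_mat n n" and B: "B \<in> carrier_mat n nu" and C: "C \<in> carrier_mat ny n"
    and D: "D \<in> carrier_mat ny nu" and X: "X \<in> carrier_mat nu nu"
    and x: "x \<in> carrier_vec n" and y: "y \<in> carrier_vec n"
  defines "u \<equiv> - (X *\<^sub>v (mat_adjoint D *\<^sub>v (C *\<^sub>v x) + mat_adjoint B *\<^sub>v y))"
  shows "- (K + B * X * mat_adjoint D * C) *\<^sub>v x + - (B * X * mat_adjoint B) *\<^sub>v y = B *\<^sub>v u - K *\<^sub>v x"
proof -
  have aB: "mat_adjoint B \<in> carrier_mat nu n" and aD: "mat_adjoint D \<in> carrier_mat nu ny"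
    and BXDC: "B * X * mat_adjoint D * C \<in> carrier_mat n n" and BXB: "B * X * mat_adjoint B \<in> carrier_mat n n"
    using B C D X by auto
  have aDCx: "mat_adjoint D *\<^sub>v (C *\<^sub>v x) \<in> carrier_vec nu" and aBy: "mat_adjoint B *\<^sub>v y \<in> carrier_vec nu"
    using mult_mat_vec_carrier[OF aD mult_mat_vec_carrier[OF C x]] mult_mat_vec_carrier[OF aB y] .
  have "- (K + B * X * mat_adjoint D * C) *\<^sub>v x + - (B * X * mat_adjoint B) *\<^sub>v y
      = - (K *\<^sub>v x + B *\<^sub>v (X *\<^sub>v (mat_adjoint D *\<^sub>v (C *\<^sub>v x)))) + - (B *\<^sub>v (X *\<^sub>v (mat_adjoint B *\<^sub>v y)))"
    using K B X aD C aB BXDC BXB x y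
    by (simp del: assoc_mult_mat add: add_mult_distrib_mat_vec[OF K BXDC x] assoc_mult_mat_vec4[OF B X aD C x]
        assoc_mult_mat_vec3[OF B X aB y])
  also have "\<dots> = B *\<^sub>v u - K *\<^sub>v x"
    using K B X aDCx aBy x y unfolding u_def
    by (simp add: mult_mat_vec_uminus[OF B] mult_add_distrib_mat_vec[OF X aDCx aBy]
        mult_add_distrib_mat_vec[OF B] vec_eq_iff)
  finally show ?thesis .
qed

lemma hamiltonian_bottom_row:
  fixes K B C D X Y :: "complex mat"
  assumes K: "K \<in> carrier_mat n n" and B: "B \<in> carrier_mat n nu" and C: "C \<in> carrier_mat ny n"
    and D: "D \<in> carrier_mat ny nu" and X: "X \<in> carrier_mat nu nu" and Y: "Y \<in> carrier_mat ny ny"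
    and DXD: "D * X * mat_adjoint D = 1\<^sub>m ny + s \<cdot>\<^sub>m Y"
    and x: "x \<in> carrier_vec n" and y: "y \<in> carrier_vec n"
  defines "u \<equiv> - (X *\<^sub>v (mat_adjoint D *\<^sub>v (C *\<^sub>v x) + mat_adjoint B *\<^sub>v y))"
  shows "(s \<cdot>\<^sub>m (mat_adjoint C * Y * C)) *\<^sub>v x + (mat_adjoint K + mat_adjoint C * D * X * mat_adjoint B) *\<^sub>v y
       = mat_adjoint K *\<^sub>v y - mat_adjoint C *\<^sub>v (C *\<^sub>v x + D *\<^sub>v u)"
proof -
  let ?aB = "mat_adjoint B" and ?aC = "mat_adjoint C" and ?aD = "mat_adjoint D" and ?aK = "mat_adjoint K"
  have aB: "?aB \<in> carrier_mat nu n" and aC: "?aC \<in> carrier_mat n ny" and aD: "?aD \<in> carrier_mat nu ny"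
    and aK: "?aK \<in> carrier_mat n n" and CDXB: "?aC * D * X * ?aB \<in> carrier_mat n n"
    and Cx: "C *\<^sub>v x \<in> carrier_vec ny"
    using K B C D X x by auto
  have aDCx: "?aD *\<^sub>v (C *\<^sub>v x) \<in> carrier_vec nu" and aBy: "?aB *\<^sub>v y \<in> carrier_vec nu"
    using mult_mat_vec_carrier[OF aD Cx] mult_mat_vec_carrier[OF aB y] .
  then have u: "u \<in> carrier_vec nu"
    using X by (simp add: u_def)
  have "D *\<^sub>v u = - (D *\<^sub>v (X *\<^sub>v (?aD *\<^sub>v (C *\<^sub>v x))) + D *\<^sub>v (X *\<^sub>v (?aB *\<^sub>v y)))"
    using X aDCx aBy unfolding u_def
    by (simp add: mult_mat_vec_uminus[OF D] mult_add_distrib_mat_vec[OF X aDCx aBy] mult_add_distrib_mat_vec[OF D])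
  also have "D *\<^sub>v (X *\<^sub>v (?aD *\<^sub>v (C *\<^sub>v x))) = C *\<^sub>v x + s \<cdot>\<^sub>v (Y *\<^sub>v (C *\<^sub>v x))"
    using assoc_mult_mat_vec3[OF D X aD Cx] DXD Cx Y
    by (simp add: add_mult_distrib_mat_vec[of _ ny ny] smult_mult_mat_vec)
  finally have "C *\<^sub>v x + D *\<^sub>v u = - (s \<cdot>\<^sub>v (Y *\<^sub>v (C *\<^sub>v x))) - D *\<^sub>v (X *\<^sub>v (?aB *\<^sub>v y))"
    using C D Y X aB x y u by (simp add: vec_eq_iff)
  moreover have "Y *\<^sub>v (C *\<^sub>v x) \<in> carrier_vec ny" "D *\<^sub>v (X *\<^sub>v (?aB *\<^sub>v y)) \<in> carrier_vec ny"
    using Y C D X aB x y by auto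
  ultimately have CDu: "?aC *\<^sub>v (C *\<^sub>v x + D *\<^sub>v u)
      = - (s \<cdot>\<^sub>v (?aC *\<^sub>v (Y *\<^sub>v (C *\<^sub>v x)))) - ?aC *\<^sub>v (D *\<^sub>v (X *\<^sub>v (?aB *\<^sub>v y)))"
    by (simp add: mult_minus_distrib_mat_vec[OF aC] mult_mat_vec_uminus[OF aC] mult_mat_vec[OF aC])
  have "(s \<cdot>\<^sub>m (?aC * Y * C)) *\<^sub>v x + (?aK + ?aC * D * X * ?aB) *\<^sub>v y
      = s \<cdot>\<^sub>v (?aC *\<^sub>v (Y *\<^sub>v (C *\<^sub>v x))) + (?aK *\<^sub>v y + ?aC *\<^sub>v (D *\<^sub>v (X *\<^sub>v (?aB *\<^sub>v y))))"
    using aK aC Y C D X aB CDXB x y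
    by (simp del: assoc_mult_mat add: smult_mult_mat_vec add_mult_distrib_mat_vec[OF aK CDXB y]
        assoc_mult_mat_vec3[OF aC Y C x] assoc_mult_mat_vec4[OF aC D X aB y])
  also have "\<dots> = ?aK *\<^sub>v y - ?aC *\<^sub>v (C *\<^sub>v x + D *\<^sub>v u)"
    unfolding CDu using aK aC Y C D X aB x y by (simp add: vec_eq_iff)
  finally show ?thesis .
qed

text \<open>State \<open>x\<close>, costate \<open>y\<close> and input \<open>u\<close> of the realisation \<open>G = C K\<^sup>-\<^sup>1 B + D\<close>: the input is
  mapped by \<open>K x = B u\<close> to the output \<open>z = C x + D u = G u\<close>, and \<open>K\<^sup>H y = C\<^sup>H z\<close> makes
  \<open>B\<^sup>H y + D\<^sup>H z = G\<^sup>H z\<close>, so the last equation reads \<open>G\<^sup>H G u = s u\<close>.\<close>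

definition singular_triple :: "complex mat \<Rightarrow> complex mat \<Rightarrow> complex mat \<Rightarrow> complex mat \<Rightarrow> complex
    \<Rightarrow> complex vec \<Rightarrow> complex vec \<Rightarrow> complex vec \<Rightarrow> bool" where
  "singular_triple K B C D s x y u \<longleftrightarrow> K *\<^sub>v x = B *\<^sub>v u
     \<and> mat_adjoint K *\<^sub>v y = mat_adjoint C *\<^sub>v (C *\<^sub>v x + D *\<^sub>v u)
     \<and> mat_adjoint B *\<^sub>v y + mat_adjoint D *\<^sub>v (C *\<^sub>v x + D *\<^sub>v u) = s \<cdot>\<^sub>v u"

lemma hamiltonian_kernel_iff:
  fixes K B C D X Y :: "complex mat"
  assumes K: "K \<in> carrier_mat n n" and B: "B \<in> carrier_mat n nu" and C: "C \<in> carrier_mat ny n"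
    and D: "D \<in> carrier_mat ny nu" and X: "X \<in> carrier_mat nu nu" and Y: "Y \<in> carrier_mat ny ny"
    and XDx: "X * (mat_adjoint D * D - s \<cdot>\<^sub>m 1\<^sub>m nu) = 1\<^sub>m nu"
    and DxX: "(mat_adjoint D * D - s \<cdot>\<^sub>m 1\<^sub>m nu) * X = 1\<^sub>m nu"
    and DXD: "D * X * mat_adjoint D = 1\<^sub>m ny + s \<cdot>\<^sub>m Y"
    and x: "x \<in> carrier_vec n" and y: "y \<in> carrier_vec n"
  shows "four_block_mat (- (K + B * X * mat_adjoint D * C)) (- (B * X * mat_adjoint B))
        (s \<cdot>\<^sub>m (mat_adjoint C * Y * C)) (mat_adjoint K + mat_adjoint C * D * X * mat_adjoint B)
        *\<^sub>v (x @\<^sub>v y) = 0\<^sub>v (2*n)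
    \<longleftrightarrow> (\<exists>u\<in>carrier_vec nu. singular_triple K B C D s x y u)"
proof -
  let ?w = "mat_adjoint D *\<^sub>v (C *\<^sub>v x) + mat_adjoint B *\<^sub>v y"
  let ?u = "- (X *\<^sub>v ?w)"
  have w: "?w \<in> carrier_vec nu"
    using mult_mat_vec_carrier[OF _ mult_mat_vec_carrier[OF C x], of "mat_adjoint D"]
      mult_mat_vec_carrier[OF _ y, of "mat_adjoint B"] B D by auto
  then have u: "?u \<in> carrier_vec nu"
    using X by simp
  have "four_block_mat (- (K + B * X * mat_adjoint D * C)) (- (B * X * mat_adjoint B))
        (s \<cdot>\<^sub>m (mat_adjoint C * Y * C)) (mat_adjoint K + mat_adjoint C * D * X * mat_adjoint B) *\<^sub>v (x @\<^sub>v y)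
      = (B *\<^sub>v ?u - K *\<^sub>v x) @\<^sub>v (mat_adjoint K *\<^sub>v y - mat_adjoint C *\<^sub>v (C *\<^sub>v x + D *\<^sub>v ?u))"
    unfolding hamiltonian_top_row[OF K B C D X x y, symmetric]
      hamiltonian_bottom_row[OF K B C D X Y DXD x y, symmetric]
    using K B C D X Y x y by (intro four_block_mat_mult_vec) auto
  also have "\<dots> = 0\<^sub>v (2*n) \<longleftrightarrow> K *\<^sub>v x = B *\<^sub>v ?u \<and> mat_adjoint K *\<^sub>v y = mat_adjoint C *\<^sub>v (C *\<^sub>v x + D *\<^sub>v ?u)"
  proof -
    have aK: "mat_adjoint K \<in> carrier_mat n n" and aC: "mat_adjoint C \<in> carrier_mat n ny"
      and "C *\<^sub>v x + D *\<^sub>v ?u \<in> carrier_vec ny"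
      using K C D x u by auto
    then have "B *\<^sub>v ?u \<in> carrier_vec n" "K *\<^sub>v x \<in> carrier_vec n" "mat_adjoint K *\<^sub>v y \<in> carrier_vec n"
      "mat_adjoint C *\<^sub>v (C *\<^sub>v x + D *\<^sub>v ?u) \<in> carrier_vec n"
      using K B x y u mult_mat_vec_carrier[OF aK y] mult_mat_vec_carrier[OF aC] by auto
    then show ?thesis
      by (auto simp: append_vec_eq_0_iff[of _ n] diff_vec_eq_0_iff[of _ n])
  qed
  also have "\<dots> \<longleftrightarrow> (\<exists>u\<in>carrier_vec nu. singular_triple K B C D s x y u)"
  proof -
    have "mat_adjoint B *\<^sub>v y + mat_adjoint D *\<^sub>v (C *\<^sub>v x + D *\<^sub>v v) = s \<cdot>\<^sub>v v \<longleftrightarrow> v = ?u"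
      if "v \<in> carrier_vec nu" for v
      using shifted_gram_eq_iff[OF D X XDx DxX w that] that B C D x y
      by (auto simp: mult_add_distrib_mat_vec[of _ nu ny] vec_eq_iff algebra_simps)
    then show ?thesis
      unfolding singular_triple_def using u by auto
  qed
  finally show ?thesis .
qed

lemma realisation_mult_vec:
  fixes K Ki B C D :: "complex mat"
  assumes Ki: "Ki \<in> carrier_mat n n" and B: "B \<in> carrier_mat n nu" and C: "C \<in> carrier_mat ny n"
    and D: "D \<in> carrier_mat ny nu"
  shows "w \<in> carrier_vec nu \<Longrightarrow> (C * Ki * B + D) *\<^sub>v w = C *\<^sub>v (Ki *\<^sub>v (B *\<^sub>v w)) + D *\<^sub>v w"
    and "z \<in> carrier_vec ny \<Longrightarrow> mat_adjoint (C * Ki * B + D) *\<^sub>v z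
       = mat_adjoint B *\<^sub>v (mat_adjoint Ki *\<^sub>v (mat_adjoint C *\<^sub>v z)) + mat_adjoint D *\<^sub>v z"
proof -
  have aB: "mat_adjoint B \<in> carrier_mat nu n" and aC: "mat_adjoint C \<in> carrier_mat n ny"
    and aD: "mat_adjoint D \<in> carrier_mat nu ny" and aKi: "mat_adjoint Ki \<in> carrier_mat n n"
    and CKi: "C * Ki \<in> carrier_mat ny n"
    using B C D Ki by auto
  show "(C * Ki * B + D) *\<^sub>v w = C *\<^sub>v (Ki *\<^sub>v (B *\<^sub>v w)) + D *\<^sub>v w" if "w \<in> carrier_vec nu"
    by (simp only: add_mult_distrib_mat_vec[OF mult_carrier_mat[OF CKi B] D that]
        assoc_mult_mat_vec3[OF C Ki B that])
  have "mat_adjoint (C * Ki * B + D) = mat_adjoint B * mat_adjoint Ki * mat_adjoint C + mat_adjoint D"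
    by (simp only: mat_adjoint_add[OF mult_carrier_mat[OF CKi B] D] mat_adjoint_mult[OF CKi B]
        mat_adjoint_mult[OF C Ki] assoc_mult_mat[OF aB aKi aC])
  then show "mat_adjoint (C * Ki * B + D) *\<^sub>v z
      = mat_adjoint B *\<^sub>v (mat_adjoint Ki *\<^sub>v (mat_adjoint C *\<^sub>v z)) + mat_adjoint D *\<^sub>v z"
    if "z \<in> carrier_vec ny"
    by (simp only: add_mult_distrib_mat_vec[OF mult_carrier_mat[OF mult_carrier_mat[OF aB aKi] aC] aD that]
        assoc_mult_mat_vec3[OF aB aKi aC that])
qed

lemma singular_triple_gram:
  fixes K Ki B C D :: "complex mat"
  assumes K: "K \<in> carrier_mat n n" and Ki: "Ki \<in> carrier_mat n n" and KKi: "K * Ki = 1\<^sub>m n" and KiK: "Ki * K = 1\<^sub>m n"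
    and B: "B \<in> carrier_mat n nu" and C: "C \<in> carrier_mat ny n" and D: "D \<in> carrier_mat ny nu"
    and x: "x \<in> carrier_vec n" and y: "y \<in> carrier_vec n" and u: "u \<in> carrier_vec nu"
    and triple: "singular_triple K B C D s x y u"
  shows "mat_adjoint (C * Ki * B + D) *\<^sub>v ((C * Ki * B + D) *\<^sub>v u) = s \<cdot>\<^sub>v u"
    and "u = 0\<^sub>v nu \<Longrightarrow> x = 0\<^sub>v n \<and> y = 0\<^sub>v n"
proof -
  have aC: "mat_adjoint C \<in> carrier_mat n ny" and aK: "mat_adjoint K \<in> carrier_mat n n"
    and aKi: "mat_adjoint Ki \<in> carrier_mat n n"
    using C K Ki by auto
  have x_eq: "x = Ki *\<^sub>v (B *\<^sub>v u)" and y_eq: "y = mat_adjoint Ki *\<^sub>v (mat_adjoint C *\<^sub>v (C *\<^sub>v x + D *\<^sub>v u))"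
    using triple assoc_mult_mat_vec[OF Ki K x] assoc_mult_mat_vec[OF aKi aK y] KiK
      mat_adjoint_inverse[OF K Ki KKi] x y unfolding singular_triple_def by (auto simp flip: assoc_mult_mat_vec)
  have Gu: "(C * Ki * B + D) *\<^sub>v u = C *\<^sub>v x + D *\<^sub>v u"
    unfolding x_eq by (rule realisation_mult_vec(1)[OF Ki B C D u])
  show "mat_adjoint (C * Ki * B + D) *\<^sub>v ((C * Ki * B + D) *\<^sub>v u) = s \<cdot>\<^sub>v u"
    using realisation_mult_vec(2)[OF Ki B C D, of "C *\<^sub>v x + D *\<^sub>v u"] triple C D x u
    by (simp add: Gu singular_triple_def flip: y_eq)
  assume "u = 0\<^sub>v nu"
  then have "x = 0\<^sub>v n"
    using x_eq mult_mat_vec_zero[OF B] mult_mat_vec_zero[OF Ki] by simp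
  moreover have "C *\<^sub>v 0\<^sub>v n + D *\<^sub>v 0\<^sub>v nu = 0\<^sub>v ny"
    using mult_mat_vec_zero[OF C] mult_mat_vec_zero[OF D] by simp
  ultimately show "x = 0\<^sub>v n \<and> y = 0\<^sub>v n"
    using \<open>u = 0\<^sub>v nu\<close> y_eq mult_mat_vec_zero[OF aC] mult_mat_vec_zero[OF aKi] by simp
qed

lemma singular_triple_of_eigenvector:
  fixes K Ki B C D :: "complex mat"
  assumes K: "K \<in> carrier_mat n n" and Ki: "Ki \<in> carrier_mat n n" and KKi: "K * Ki = 1\<^sub>m n"
    and KiK: "Ki * K = 1\<^sub>m n"
    and B: "B \<in> carrier_mat n nu" and C: "C \<in> carrier_mat ny n" and D: "D \<in> carrier_mat ny nu"
    and u: "u \<in> carrier_vec nu"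
    and eig: "mat_adjoint (C * Ki * B + D) *\<^sub>v ((C * Ki * B + D) *\<^sub>v u) = s \<cdot>\<^sub>v u"
  defines "x \<equiv> Ki *\<^sub>v (B *\<^sub>v u)"
    and "y \<equiv> mat_adjoint Ki *\<^sub>v (mat_adjoint C *\<^sub>v ((C * Ki * B + D) *\<^sub>v u))"
  shows "singular_triple K B C D s x y u"
proof -
  have aC: "mat_adjoint C \<in> carrier_mat n ny" and aK: "mat_adjoint K \<in> carrier_mat n n"
    and aKi: "mat_adjoint Ki \<in> carrier_mat n n" and G: "C * Ki * B + D \<in> carrier_mat ny nu"
    using C K Ki B D by auto
  have Gu: "(C * Ki * B + D) *\<^sub>v u = C *\<^sub>v x + D *\<^sub>v u"
    unfolding x_def by (rule realisation_mult_vec(1)[OF Ki B C D u])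
  have "K *\<^sub>v x = B *\<^sub>v u"
    using assoc_mult_mat_vec[OF K Ki, of "B *\<^sub>v u"] KKi B u by (simp add: x_def)
  moreover have "mat_adjoint K *\<^sub>v y = mat_adjoint C *\<^sub>v (C *\<^sub>v x + D *\<^sub>v u)"
    using assoc_mult_mat_vec[OF aK aKi, of "mat_adjoint C *\<^sub>v ((C * Ki * B + D) *\<^sub>v u)"]
      mat_adjoint_inverse[OF Ki K KiK] aC G u
    by (simp add: y_def flip: Gu)
  moreover have "mat_adjoint B *\<^sub>v y + mat_adjoint D *\<^sub>v (C *\<^sub>v x + D *\<^sub>v u) = s \<cdot>\<^sub>v u"
    using realisation_mult_vec(2)[OF Ki B C D, of "(C * Ki * B + D) *\<^sub>v u"] eig G u
    by (simp add: y_def flip: Gu)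
  ultimately show ?thesis
    unfolding singular_triple_def by blast
qed

lemma singular_triple_zero_state:
  fixes K B C D X :: "complex mat"
  assumes B: "B \<in> carrier_mat n nu" and C: "C \<in> carrier_mat ny n" and D: "D \<in> carrier_mat ny nu"
    and X: "X \<in> carrier_mat nu nu"
    and XDx: "X * (mat_adjoint D * D - s \<cdot>\<^sub>m 1\<^sub>m nu) = 1\<^sub>m nu"
    and DxX: "(mat_adjoint D * D - s \<cdot>\<^sub>m 1\<^sub>m nu) * X = 1\<^sub>m nu"
    and u: "u \<in> carrier_vec nu" and "singular_triple K B C D s (0\<^sub>v n) (0\<^sub>v n) u"
  shows "u = 0\<^sub>v nu"
proof -
  have "0\<^sub>v nu + mat_adjoint D *\<^sub>v (D *\<^sub>v u) = s \<cdot>\<^sub>v u"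
    using assms(8) mult_mat_vec_zero[OF C] mult_mat_vec_zero[of "mat_adjoint B" nu n] B D u
    unfolding singular_triple_def by simp
  then show ?thesis
    using shifted_gram_eq_iff[OF D X XDx DxX _ u] mult_mat_vec_zero[OF X] by simp
qed

lemma hamiltonian_singular_iff_eigenvalue:
  fixes K Ki B C D X Y :: "complex mat"
  assumes K: "K \<in> carrier_mat n n" and Ki: "Ki \<in> carrier_mat n n" and "K * Ki = 1\<^sub>m n" "Ki * K = 1\<^sub>m n"
    and B: "B \<in> carrier_mat n nu" and C: "C \<in> carrier_mat ny n" and D: "D \<in> carrier_mat ny nu"
    and X: "X \<in> carrier_mat nu nu" and Y: "Y \<in> carrier_mat ny ny"
    and XDx: "X * (mat_adjoint D * D - s \<cdot>\<^sub>m 1\<^sub>m nu) = 1\<^sub>m nu"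
    and DxX: "(mat_adjoint D * D - s \<cdot>\<^sub>m 1\<^sub>m nu) * X = 1\<^sub>m nu"
    and DXD: "D * X * mat_adjoint D = 1\<^sub>m ny + s \<cdot>\<^sub>m Y"
  shows "(\<exists>v. v \<in> carrier_vec (2*n) \<and> v \<noteq> 0\<^sub>v (2*n) \<and>
        four_block_mat (- (K + B * X * mat_adjoint D * C)) (- (B * X * mat_adjoint B))
          (s \<cdot>\<^sub>m (mat_adjoint C * Y * C)) (mat_adjoint K + mat_adjoint C * D * X * mat_adjoint B)
        *\<^sub>v v = 0\<^sub>v (2*n))
    \<longleftrightarrow> eigenvalue (mat_adjoint (C * Ki * B + D) * (C * Ki * B + D)) s"
proof -
  let ?G = "C * Ki * B + D"
  have G: "?G \<in> carrier_mat ny nu"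
    using C Ki B D by auto
  have eigenvalue_gram: "eigenvalue (mat_adjoint ?G * ?G) s
      \<longleftrightarrow> (\<exists>u\<in>carrier_vec nu. u \<noteq> 0\<^sub>v nu \<and> mat_adjoint ?G *\<^sub>v (?G *\<^sub>v u) = s \<cdot>\<^sub>v u)"
  proof -
    have "(mat_adjoint ?G * ?G) *\<^sub>v u = mat_adjoint ?G *\<^sub>v (?G *\<^sub>v u)" if "u \<in> carrier_vec nu" for u
      using assoc_mult_mat_vec[OF mat_adjoint_carrier[OF G] G that] .
    then show ?thesis
      unfolding eigenvalue_def eigenvector_def using D by auto
  qed
  show ?thesis
    unfolding ex_nonzero_append_vec_iff eigenvalue_gram
  proof
    assume "\<exists>x\<in>carrier_vec n. \<exists>y\<in>carrier_vec n. (x \<noteq> 0\<^sub>v n \<or> y \<noteq> 0\<^sub>v n) \<and> four_block_mat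
      (- (K + B * X * mat_adjoint D * C)) (- (B * X * mat_adjoint B)) (s \<cdot>\<^sub>m (mat_adjoint C * Y * C))
      (mat_adjoint K + mat_adjoint C * D * X * mat_adjoint B) *\<^sub>v (x @\<^sub>v y) = 0\<^sub>v (2 * n)"
    then obtain x y u where "x \<in> carrier_vec n" "y \<in> carrier_vec n" "x \<noteq> 0\<^sub>v n \<or> y \<noteq> 0\<^sub>v n"
      "u \<in> carrier_vec nu" "singular_triple K B C D s x y u"
      using hamiltonian_kernel_iff[OF K B C D X Y XDx DxX DXD] by blast
    then show "\<exists>u\<in>carrier_vec nu. u \<noteq> 0\<^sub>v nu \<and> mat_adjoint ?G *\<^sub>v (?G *\<^sub>v u) = s \<cdot>\<^sub>v u"
      using singular_triple_gram[OF assms(1-7)] by blast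
  next
    assume "\<exists>u\<in>carrier_vec nu. u \<noteq> 0\<^sub>v nu \<and> mat_adjoint ?G *\<^sub>v (?G *\<^sub>v u) = s \<cdot>\<^sub>v u"
    then obtain u where u: "u \<in> carrier_vec nu" "u \<noteq> 0\<^sub>v nu" and eig: "mat_adjoint ?G *\<^sub>v (?G *\<^sub>v u) = s \<cdot>\<^sub>v u"
      by blast
    define x where "x = Ki *\<^sub>v (B *\<^sub>v u)"
    define y where "y = mat_adjoint Ki *\<^sub>v (mat_adjoint C *\<^sub>v (?G *\<^sub>v u))"
    have triple: "singular_triple K B C D s x y u"
      unfolding x_def y_def by (rule singular_triple_of_eigenvector[OF K Ki assms(3,4) B C D u(1) eig])
    moreover have "x \<in> carrier_vec n" "y \<in> carrier_vec n"
      unfolding x_def y_def using Ki B u(1)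
        mult_mat_vec_carrier[OF _ mult_mat_vec_carrier[OF _ mult_mat_vec_carrier[OF G u(1)]],
          of "mat_adjoint Ki" n n "mat_adjoint C"] C
      by auto
    moreover have "x \<noteq> 0\<^sub>v n \<or> y \<noteq> 0\<^sub>v n"
      using singular_triple_zero_state[OF B C D X XDx DxX u(1)] triple u(2) by auto
    ultimately show "\<exists>x\<in>carrier_vec n. \<exists>y\<in>carrier_vec n. (x \<noteq> 0\<^sub>v n \<or> y \<noteq> 0\<^sub>v n) \<and> four_block_mat
      (- (K + B * X * mat_adjoint D * C)) (- (B * X * mat_adjoint B)) (s \<cdot>\<^sub>m (mat_adjoint C * Y * C))
      (mat_adjoint K + mat_adjoint C * D * X * mat_adjoint B) *\<^sub>v (x @\<^sub>v y) = 0\<^sub>v (2 * n)"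
      using hamiltonian_kernel_iff[OF K B C D X Y XDx DxX DXD] u(1) by blast
  qed
qed

section \<open>Lagrange interpolation on the mesh\<close>

abbreviation mesh :: "nat \<Rightarrow> int set" where
  "mesh N \<equiv> {-int N..int N}"

lemma poly_eq_0_if_zero_on_mesh:
  fixes q :: "complex poly"
  assumes inj: "inj_on \<theta> (mesh N)" and deg: "degree q \<le> 2*N"
    and zero: "\<forall>i\<in>mesh N. poly q (complex_of_real (\<theta> i)) = 0"
  shows "q = 0"
proof (rule ccontr)
  assume "q \<noteq> 0"
  let ?nodes = "(\<lambda>i. complex_of_real (\<theta> i)) ` mesh N"
  have "inj_on (\<lambda>i. complex_of_real (\<theta> i)) (mesh N)"
    using inj by (auto simp: inj_on_def)
  then have "2*N + 1 = card ?nodes"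
    by (simp add: card_image)
  also have "\<dots> \<le> card {x. poly q x = 0}"
    using zero poly_roots_finite[OF \<open>q \<noteq> 0\<close>] by (intro card_mono) auto
  also have "\<dots> \<le> degree q"
    using \<open>q \<noteq> 0\<close> by (rule card_poly_roots_bound)
  finally show False
    using deg by simp
qed

definition lagrange_basis :: "(int \<Rightarrow> real) \<Rightarrow> nat \<Rightarrow> int \<Rightarrow> complex poly" where
  "lagrange_basis \<theta> N j =
     smult (1 / (\<Prod>l\<in>mesh N - {j}. complex_of_real (\<theta> j - \<theta> l)))
       (\<Prod>l\<in>mesh N - {j}. [:- complex_of_real (\<theta> l), 1:])"

lemma degree_lagrange_basis:
  assumes "j \<in> mesh N"
  shows "degree (lagrange_basis \<theta> N j) \<le> 2*N"
proof -
  have "degree (\<Prod>l\<in>mesh N - {j}. [:- complex_of_real (\<theta> l), 1:]) \<le> card (mesh N - {j})"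
    using degree_prod_sum_le[of "mesh N - {j}" "\<lambda>l. [:- complex_of_real (\<theta> l), 1:]"] by simp
  also have "\<dots> = 2*N"
    using assms by simp
  finally show ?thesis
    unfolding lagrange_basis_def using degree_smult_le order_trans by blast
qed

lemma poly_lagrange_basis:
  assumes inj: "inj_on \<theta> (mesh N)" and "j \<in> mesh N" "i \<in> mesh N"
  shows "poly (lagrange_basis \<theta> N j) (complex_of_real (\<theta> i)) = (if i = j then 1 else 0)"
proof -
  have "(\<Prod>l\<in>mesh N - {j}. complex_of_real (\<theta> j - \<theta> l)) \<noteq> 0"
    using inj \<open>j \<in> mesh N\<close> by (auto simp: inj_on_def)
  moreover have "i \<noteq> j \<Longrightarrow> (\<Prod>l\<in>mesh N - {j}. complex_of_real (\<theta> i) - complex_of_real (\<theta> l)) = 0"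
    using \<open>i \<in> mesh N\<close> by (intro prod_zero) auto
  ultimately show ?thesis
    by (auto simp: lagrange_basis_def poly_prod)
qed

lemma lagrange_interpolant:
  assumes "inj_on \<theta> (mesh N)"
  shows "degree (\<Sum>j\<in>mesh N. smult (f j) (lagrange_basis \<theta> N j)) \<le> 2*N"
    and "i \<in> mesh N \<Longrightarrow> poly (\<Sum>j\<in>mesh N. smult (f j) (lagrange_basis \<theta> N j)) (complex_of_real (\<theta> i)) = f i"
proof -
  show "degree (\<Sum>j\<in>mesh N. smult (f j) (lagrange_basis \<theta> N j)) \<le> 2*N"
    by (rule degree_sum_le) (auto simp: degree_lagrange_basis)
  assume "i \<in> mesh N"
  then show "poly (\<Sum>j\<in>mesh N. smult (f j) (lagrange_basis \<theta> N j)) (complex_of_real (\<theta> i)) = f i"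
  proof -
    have "poly (\<Sum>j\<in>mesh N. smult (f j) (lagrange_basis \<theta> N j)) (complex_of_real (\<theta> i))
        = (\<Sum>j\<in>mesh N. if j = i then f j else 0)"
      unfolding poly_sum using assms \<open>i \<in> mesh N\<close> by (intro sum.cong) (auto simp: poly_lagrange_basis)
    also have "\<dots> = f i"
      using \<open>i \<in> mesh N\<close> by simp
    finally show ?thesis .
  qed
qed

lemma interp_poly_eqI:
  assumes inj: "inj_on \<theta> (mesh N)" and "degree q \<le> 2*N"
    and "\<forall>i\<in>mesh N. poly q (complex_of_real (\<theta> i)) = f i"
  shows "interp_poly \<theta> N f = q"
  unfolding interp_poly_def
proof (rule the_equality)
  fix r assume r: "degree r \<le> 2*N \<and> (\<forall>i\<in>mesh N. poly r (complex_of_real (\<theta> i)) = f i)"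
  have "r - q = 0"
    by (rule poly_eq_0_if_zero_on_mesh[OF inj]) (use r assms degree_diff_le in auto)
  then show "r = q"
    by simp
qed (use assms in simp)

lemma interp_poly_lagrange:
  "inj_on \<theta> (mesh N) \<Longrightarrow> interp_poly \<theta> N f = (\<Sum>j\<in>mesh N. smult (f j) (lagrange_basis \<theta> N j))"
  by (rule interp_poly_eqI) (simp_all add: lagrange_interpolant)

lemma degree_interp_poly: "inj_on \<theta> (mesh N) \<Longrightarrow> degree (interp_poly \<theta> N f) \<le> 2*N"
  by (simp add: interp_poly_lagrange lagrange_interpolant)

lemma poly_interp_poly:
  "inj_on \<theta> (mesh N) \<Longrightarrow> i \<in> mesh N \<Longrightarrow> poly (interp_poly \<theta> N f) (complex_of_real (\<theta> i)) = f i"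
  by (simp add: interp_poly_lagrange lagrange_interpolant)

lemma interp_poly_cong: "(\<And>i. i \<in> mesh N \<Longrightarrow> f i = g i) \<Longrightarrow> interp_poly \<theta> N f = interp_poly \<theta> N g"
  unfolding interp_poly_def by simp

lemma PN_index:
  assumes "inj_on \<theta> (mesh N)" "k < d"
  shows "PN \<theta> N d x t $ k = (\<Sum>j\<in>mesh N. x j $ k * poly (lagrange_basis \<theta> N j) (complex_of_real t))"
  unfolding PN_def using assms by (simp add: interp_poly_lagrange poly_sum)

lemma PN_deriv_index:
  assumes "inj_on \<theta> (mesh N)" "k < d"
  shows "PN_deriv \<theta> N d x t $ k = (\<Sum>j\<in>mesh N. x j $ k * poly (pderiv (lagrange_basis \<theta> N j)) (complex_of_real t))"
  unfolding PN_deriv_def using assms by (simp add: interp_poly_lagrange poly_sum pderiv_sum pderiv_smult)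

lemma dim_PN [simp]: "dim_vec (PN \<theta> N d x t) = d" "dim_vec (PN_deriv \<theta> N d x t) = d"
  unfolding PN_def PN_deriv_def by auto

section \<open>The matrix \<open>L\<^sub>N\<close> and the operator it represents\<close>

text \<open>\<open>LN_mat\<close> is defined column by column from the images of unit vectors; linearity in this
  coordinate form is what makes it act on every vector as \<open>LN_op\<close>.\<close>

definition mesh_linear :: "nat \<Rightarrow> nat \<Rightarrow> ((int \<Rightarrow> complex vec) \<Rightarrow> complex) \<Rightarrow> bool" where
  "mesh_linear d N F \<longleftrightarrow> (\<exists>c. \<forall>x. F x = (\<Sum>j\<in>mesh N. \<Sum>k<d. c j k * x j $ k))"

lemma mesh_linear_add:
  assumes "mesh_linear d N F" "mesh_linear d N G"
  shows "mesh_linear d N (\<lambda>x. F x + G x)"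
proof -
  obtain c c' where "\<forall>x. F x = (\<Sum>j\<in>mesh N. \<Sum>k<d. c j k * x j $ k)"
    and "\<forall>x. G x = (\<Sum>j\<in>mesh N. \<Sum>k<d. c' j k * x j $ k)"
    using assms unfolding mesh_linear_def by blast
  then show ?thesis
    unfolding mesh_linear_def
    by (intro exI[of _ "\<lambda>j k. c j k + c' j k"]) (simp add: sum.distrib distrib_right)
qed

lemma mesh_linear_scale:
  assumes "mesh_linear d N F"
  shows "mesh_linear d N (\<lambda>x. a * F x)"
proof -
  obtain c where "\<forall>x. F x = (\<Sum>j\<in>mesh N. \<Sum>k<d. c j k * x j $ k)"
    using assms unfolding mesh_linear_def by blast
  then show ?thesis
    unfolding mesh_linear_def
    by (intro exI[of _ "\<lambda>j k. a * c j k"]) (simp add: sum_distrib_left mult.assoc)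
qed

lemma mesh_linear_sum:
  assumes "finite S" "\<And>l. l \<in> S \<Longrightarrow> mesh_linear d N (F l)"
  shows "mesh_linear d N (\<lambda>x. \<Sum>l\<in>S. F l x)"
  using assms
proof (induction S rule: finite_induct)
  case empty
  show ?case
    unfolding mesh_linear_def by (intro exI[of _ "\<lambda>j k. 0"]) simp
qed (simp add: mesh_linear_add)

lemma mesh_linear_component:
  assumes "j \<in> mesh N" "k < d"
  shows "mesh_linear d N (\<lambda>x. x j $ k)"
  unfolding mesh_linear_def
proof (intro exI[of _ "\<lambda>j' k'. if j' = j \<and> k' = k then 1 else 0"] allI)
  fix x :: "int \<Rightarrow> complex vec"
  have "(\<Sum>k'<d. (if j' = j \<and> k' = k then 1 else 0) * x j' $ k') = (if j' = j then x j $ k else 0)" for j'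
    using assms(2) by (simp add: if_distrib[of "\<lambda>z. z * _"] sum.delta cong: if_cong)
  then show "x j $ k = (\<Sum>j'\<in>mesh N. \<Sum>k'<d. (if j' = j \<and> k' = k then 1 else 0) * x j' $ k')"
    using assms(1) by simp
qed

lemma mesh_linear_PN:
  assumes "inj_on \<theta> (mesh N)" "k < d"
  shows "mesh_linear d N (\<lambda>x. PN \<theta> N d x t $ k)"
  unfolding PN_index[OF assms]
  by (intro mesh_linear_sum) (auto simp: mult.commute[of _ "poly _ _"] intro!: mesh_linear_scale mesh_linear_component assms(2))

lemma mesh_linear_PN_deriv:
  assumes "inj_on \<theta> (mesh N)" "k < d"
  shows "mesh_linear d N (\<lambda>x. PN_deriv \<theta> N d x t $ k)"
  unfolding PN_deriv_index[OF assms]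
  by (intro mesh_linear_sum) (auto simp: mult.commute[of _ "poly _ _"] intro!: mesh_linear_scale mesh_linear_component assms(2))

lemma mesh_linear_mult_mat_PN:
  assumes "inj_on \<theta> (mesh N)" "M \<in> carrier_mat r d" "k < r"
  shows "mesh_linear d N (\<lambda>x. (M *\<^sub>v PN \<theta> N d x t) $ k)"
proof -
  have "(M *\<^sub>v PN \<theta> N d x t) $ k = (\<Sum>k'\<in>{0..<d}. M $$ (k, k') * PN \<theta> N d x t $ k')" for x
    using assms(2,3) by (simp add: scalar_prod_def)
  then show ?thesis
    by (simp only:) (intro mesh_linear_sum mesh_linear_scale mesh_linear_PN assms(1); simp)
qed

lemma M0_carrier:
  assumes "A0 \<in> carrier_mat n n" "B \<in> carrier_mat n nu" "C \<in> carrier_mat ny n"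
  shows "M0 nu ny A0 B C D \<xi> \<in> carrier_mat (2*n) (2*n)"
  unfolding M0_def mult_2 using assms by (intro four_block_carrier_mat) auto

lemma Mplus_carrier: "Ai \<in> carrier_mat n n \<Longrightarrow> Mplus n Ai \<in> carrier_mat (2*n) (2*n)"
  unfolding Mplus_def mult_2 by (rule four_block_carrier_mat) auto

lemma Mminus_carrier: "Ai \<in> carrier_mat n n \<Longrightarrow> Mminus n Ai \<in> carrier_mat (2*n) (2*n)"
  unfolding Mminus_def mult_2 by (rule four_block_carrier_mat) auto

lemma mesh_linear_LN_op:
  assumes inj: "inj_on \<theta> (mesh N)" and k: "k < 2*n"
    and A: "\<forall>i\<in>{0..m}. A i \<in> carrier_mat n n" and B: "B \<in> carrier_mat n nu" and C: "C \<in> carrier_mat ny n"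
  shows "mesh_linear (2*n) N (\<lambda>x. LN_op n m nu ny A B C D \<tau> \<theta> N \<xi> x i $ k)"
proof (cases "i = 0")
  case True
  have Al: "A l \<in> carrier_mat n n" if "l \<in> {0..m}" for l
    using A that by blast
  have "LN_op n m nu ny A B C D \<tau> \<theta> N \<xi> x i $ k
      = (cmat (M0 nu ny (A 0) B C D \<xi>) *\<^sub>v PN \<theta> N (2*n) x 0) $ k
        + (\<Sum>l\<in>{1..m}. (cmat (Mplus n (A l)) *\<^sub>v PN \<theta> N (2*n) x (- \<tau> l)
                       + cmat (Mminus n (A l)) *\<^sub>v PN \<theta> N (2*n) x (\<tau> l)) $ k)" for x
    using True k by (simp add: LN_op_def vsum_def)
  also have "\<dots> x = (cmat (M0 nu ny (A 0) B C D \<xi>) *\<^sub>v PN \<theta> N (2*n) x 0) $ k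
        + (\<Sum>l\<in>{1..m}. (cmat (Mplus n (A l)) *\<^sub>v PN \<theta> N (2*n) x (- \<tau> l)) $ k
                       + (cmat (Mminus n (A l)) *\<^sub>v PN \<theta> N (2*n) x (\<tau> l)) $ k)" for x
    using k carrier_matD[OF Mminus_carrier[OF Al]]
    by (intro arg_cong2[where f = "(+)"] sum.cong refl index_add_vec(1)) auto
  finally show ?thesis
    by (simp only:) (intro mesh_linear_add mesh_linear_sum mesh_linear_mult_mat_PN[OF inj];
        use k B C Al M0_carrier Mplus_carrier Mminus_carrier in auto)
next
  case False
  then show ?thesis
    using mesh_linear_PN_deriv[OF inj k] by (simp add: LN_op_def)
qed

lemma flat_index_less:
  assumes "i \<in> mesh N" "k < d"
  shows "nat (i + int N) * d + k < d * (2*N + 1)"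
proof -
  have "nat (i + int N) * d \<le> 2*N * d"
    using assms(1) by (intro mult_le_mono1) auto
  moreover have "d * (2*N + 1) = 2*N * d + d"
    by (simp add: algebra_simps)
  ultimately show ?thesis
    using assms(2) by linarith
qed

lemma flat_index_decode:
  assumes "i \<in> mesh N" "k < d"
  shows "int ((nat (i + int N) * d + k) div d) - int N = i" "(nat (i + int N) * d + k) mod d = k"
  using assms by auto

lemma flat_index_block:
  assumes "r < d * (2*N + 1)"
  shows "int (r div d) - int N \<in> mesh N" "nat (int (r div d) - int N + int N) * d + r mod d = r"
proof -
  have "r div d < 2*N + 1"
    using assms by (simp add: less_mult_imp_div_less mult.commute)
  then show "int (r div d) - int N \<in> mesh N"
    by auto
  show "nat (int (r div d) - int N + int N) * d + r mod d = r"
    by simp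
qed

lemma mesh_linear_flatten:
  assumes F: "mesh_linear d N F"
  shows "F (unflatten d N w) = (\<Sum>c<d * (2*N + 1). F (unflatten d N (unit_vec (d * (2*N + 1)) c)) * w $ c)"
proof -
  define K where "K = d * (2*N + 1)"
  let ?pos = "\<lambda>j k. nat (j + int N) * d + k"
  obtain a where a: "\<And>x. F x = (\<Sum>j\<in>mesh N. \<Sum>k<d. a j k * x j $ k)"
    using F unfolding mesh_linear_def by blast
  have pos: "?pos j k < K" if "j \<in> mesh N" "k < d" for j k
    unfolding K_def using that by (rule flat_index_less)
  have "(\<Sum>c<K. F (unflatten d N (unit_vec K c)) * w $ c)
      = (\<Sum>c<K. \<Sum>j\<in>mesh N. \<Sum>k<d. a j k * (if ?pos j k = c then w $ c else 0))"
    unfolding a sum_distrib_right by (intro sum.cong refl) (simp add: unflatten_def pos)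
  also have "\<dots> = (\<Sum>j\<in>mesh N. \<Sum>k<d. \<Sum>c<K. a j k * (if ?pos j k = c then w $ c else 0))"
    by (subst sum.swap) (simp add: sum.swap[of _ "{..<K}"])
  also have "\<dots> = (\<Sum>j\<in>mesh N. \<Sum>k<d. a j k * w $ ?pos j k)"
    by (intro sum.cong refl) (auto simp: sum_distrib_left[symmetric] pos)
  also have "\<dots> = F (unflatten d N w)"
    unfolding a unflatten_def by (intro sum.cong refl) auto
  finally show ?thesis
    by (simp only: K_def)
qed

lemma LN_mat_carrier: "LN_mat n m nu ny A B C D \<tau> \<theta> N \<xi> \<in> carrier_mat (2*n * (2*N + 1)) (2*n * (2*N + 1))"
  unfolding LN_mat_def Let_def by auto

lemma LN_mat_mult_vec:
  assumes inj: "inj_on \<theta> (mesh N)" and "n > 0"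
    and A: "\<forall>i\<in>{0..m}. A i \<in> carrier_mat n n" and B: "B \<in> carrier_mat n nu" and C: "C \<in> carrier_mat ny n"
    and w: "w \<in> carrier_vec (2*n * (2*N + 1))" and r: "r < 2*n * (2*N + 1)"
  shows "(LN_mat n m nu ny A B C D \<tau> \<theta> N \<xi> *\<^sub>v w) $ r
       = LN_op n m nu ny A B C D \<tau> \<theta> N \<xi> (unflatten (2*n) N w) (int (r div (2*n)) - int N) $ (r mod (2*n))"
proof -
  let ?F = "\<lambda>x. LN_op n m nu ny A B C D \<tau> \<theta> N \<xi> x (int (r div (2*n)) - int N) $ (r mod (2*n))"
  have "mesh_linear (2*n) N ?F"
    using \<open>n > 0\<close> by (intro mesh_linear_LN_op[OF inj _ A B C]) simp
  have "(LN_mat n m nu ny A B C D \<tau> \<theta> N \<xi> *\<^sub>v w) $ r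
      = (\<Sum>c<2*n * (2*N + 1). ?F (unflatten (2*n) N (unit_vec (2*n * (2*N + 1)) c)) * w $ c)"
    using r w by (simp add: LN_mat_def Let_def scalar_prod_def lessThan_atLeast0)
  also have "\<dots> = ?F (unflatten (2*n) N w)"
    by (rule mesh_linear_flatten[OF \<open>mesh_linear (2*n) N ?F\<close>, symmetric])
  finally show ?thesis .
qed

definition flatten_mesh :: "nat \<Rightarrow> nat \<Rightarrow> (int \<Rightarrow> complex vec) \<Rightarrow> complex vec" where
  "flatten_mesh d N x = vec (d * (2*N + 1)) (\<lambda>r. x (int (r div d) - int N) $ (r mod d))"

lemma flatten_mesh_index:
  assumes "i \<in> mesh N" "k < d"
  shows "flatten_mesh d N x $ (nat (i + int N) * d + k) = x i $ k"
  using flat_index_less[OF assms] flat_index_decode[OF assms] unfolding flatten_mesh_def by simp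

lemma unflatten_flatten_mesh:
  assumes "i \<in> mesh N" "x i \<in> carrier_vec d"
  shows "unflatten d N (flatten_mesh d N x) i = x i"
  using assms by (intro eq_vecI) (auto simp: unflatten_def flatten_mesh_index)

lemma LN_op_cong:
  assumes "\<And>i. i \<in> mesh N \<Longrightarrow> x i = y i"
  shows "LN_op n m nu ny A B C D \<tau> \<theta> N \<xi> x = LN_op n m nu ny A B C D \<tau> \<theta> N \<xi> y"
proof -
  have interp: "interp_poly \<theta> N (\<lambda>i. x i $ k) = interp_poly \<theta> N (\<lambda>i. y i $ k)" for k
    using assms by (intro interp_poly_cong) simp
  show ?thesis
    unfolding LN_op_def PN_def PN_deriv_def interp by (rule refl)
qed

lemma LN_op_unflatten_eigen:
  assumes inj: "inj_on \<theta> (mesh N)" and "n > 0"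
    and A: "\<forall>i\<in>{0..m}. A i \<in> carrier_mat n n" and B: "B \<in> carrier_mat n nu" and C: "C \<in> carrier_mat ny n"
    and w: "w \<in> carrier_vec (2*n * (2*N + 1))" and Lw: "LN_mat n m nu ny A B C D \<tau> \<theta> N \<xi> *\<^sub>v w = lam \<cdot>\<^sub>v w"
    and i: "i \<in> mesh N"
  shows "LN_op n m nu ny A B C D \<tau> \<theta> N \<xi> (unflatten (2*n) N w) i = lam \<cdot>\<^sub>v unflatten (2*n) N w i"
proof (rule eq_vecI)
  fix k assume "k < dim_vec (lam \<cdot>\<^sub>v unflatten (2*n) N w i)"
  then have k: "k < 2*n"
    by (simp add: unflatten_def)
  note pos = flat_index_less[OF i k]
  have "LN_op n m nu ny A B C D \<tau> \<theta> N \<xi> (unflatten (2*n) N w) i $ k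
      = (LN_mat n m nu ny A B C D \<tau> \<theta> N \<xi> *\<^sub>v w) $ (nat (i + int N) * (2*n) + k)"
    using LN_mat_mult_vec[OF inj \<open>n > 0\<close> A B C w pos] flat_index_decode[OF i k] by simp
  then show "LN_op n m nu ny A B C D \<tau> \<theta> N \<xi> (unflatten (2*n) N w) i $ k = (lam \<cdot>\<^sub>v unflatten (2*n) N w i) $ k"
    using Lw w k pos by (simp add: unflatten_def)
qed (simp add: LN_op_def unflatten_def)

lemma LN_mat_flatten_eigen:
  assumes inj: "inj_on \<theta> (mesh N)" and "n > 0"
    and A: "\<forall>i\<in>{0..m}. A i \<in> carrier_mat n n" and B: "B \<in> carrier_mat n nu" and C: "C \<in> carrier_mat ny n"
    and x: "\<forall>i\<in>mesh N. x i \<in> carrier_vec (2*n)"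
    and Lx: "\<forall>i\<in>mesh N. LN_op n m nu ny A B C D \<tau> \<theta> N \<xi> x i = lam \<cdot>\<^sub>v x i"
  shows "LN_mat n m nu ny A B C D \<tau> \<theta> N \<xi> *\<^sub>v flatten_mesh (2*n) N x = lam \<cdot>\<^sub>v flatten_mesh (2*n) N x"
proof (rule eq_vecI)
  let ?w = "flatten_mesh (2*n) N x" and ?blk = "\<lambda>r. int (r div (2*n)) - int N"
  have w: "?w \<in> carrier_vec (2*n * (2*N + 1))"
    by (simp add: flatten_mesh_def)
  fix r assume "r < dim_vec (lam \<cdot>\<^sub>v ?w)"
  then have r: "r < 2*n * (2*N + 1)"
    by (simp add: flatten_mesh_def)
  note blk = flat_index_block[OF r]
  have "LN_op n m nu ny A B C D \<tau> \<theta> N \<xi> (unflatten (2*n) N ?w) = LN_op n m nu ny A B C D \<tau> \<theta> N \<xi> x"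
    using x by (intro LN_op_cong) (simp add: unflatten_flatten_mesh)
  then have "(LN_mat n m nu ny A B C D \<tau> \<theta> N \<xi> *\<^sub>v ?w) $ r = lam * x (?blk r) $ (r mod (2*n))"
    using LN_mat_mult_vec[OF inj \<open>n > 0\<close> A B C w r] Lx blk \<open>n > 0\<close> x[rule_format, OF blk(1)] by simp
  then show "(LN_mat n m nu ny A B C D \<tau> \<theta> N \<xi> *\<^sub>v ?w) $ r = (lam \<cdot>\<^sub>v ?w) $ r"
    using r by (simp add: flatten_mesh_def)
qed (simp add: carrier_matD(1)[OF LN_mat_carrier] flatten_mesh_def)

lemma eigenvalue_LN_mat_iff:
  assumes inj: "inj_on \<theta> (mesh N)" and "n > 0"
    and A: "\<forall>i\<in>{0..m}. A i \<in> carrier_mat n n" and B: "B \<in> carrier_mat n nu" and C: "C \<in> carrier_mat ny n"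
  shows "eigenvalue (LN_mat n m nu ny A B C D \<tau> \<theta> N \<xi>) lam \<longleftrightarrow>
    (\<exists>x. (\<forall>i\<in>mesh N. x i \<in> carrier_vec (2*n)) \<and> (\<exists>i\<in>mesh N. x i \<noteq> 0\<^sub>v (2*n))
       \<and> (\<forall>i\<in>mesh N. LN_op n m nu ny A B C D \<tau> \<theta> N \<xi> x i = lam \<cdot>\<^sub>v x i))"
    (is "_ \<longleftrightarrow> (\<exists>x. ?eigen x)")
proof -
  let ?d = "2*n" let ?K = "2*n * (2*N + 1)" and ?L = "LN_mat n m nu ny A B C D \<tau> \<theta> N \<xi>"
  have dimL: "dim_row ?L = ?K"
    using LN_mat_carrier by (rule carrier_matD)
  show ?thesis
  proof
    assume "eigenvalue ?L lam"
    then obtain w where w: "w \<in> carrier_vec ?K" "w \<noteq> 0\<^sub>v ?K" and Lw: "?L *\<^sub>v w = lam \<cdot>\<^sub>v w"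
      unfolding eigenvalue_def eigenvector_def dimL by blast
    obtain r where r: "r < ?K" "w $ r \<noteq> 0"
      using w by (auto simp: vec_eq_iff)
    let ?i = "int (r div ?d) - int N"
    have "unflatten ?d N w ?i $ (r mod ?d) \<noteq> 0\<^sub>v ?d $ (r mod ?d)"
      using flat_index_block[OF r(1)] r(2) \<open>n > 0\<close> by (simp add: unflatten_def)
    then have "unflatten ?d N w ?i \<noteq> 0\<^sub>v ?d"
      by auto
    moreover have "unflatten ?d N w i \<in> carrier_vec ?d" for i
      by (simp add: unflatten_def)
    ultimately show "\<exists>x. ?eigen x"
      using LN_op_unflatten_eigen[OF inj \<open>n > 0\<close> A B C w(1) Lw] flat_index_block(1)[OF r(1)] by blast
  next
    assume "\<exists>x. ?eigen x"
    then obtain x i0 where x: "\<forall>i\<in>mesh N. x i \<in> carrier_vec ?d" and i0: "i0 \<in> mesh N" "x i0 \<noteq> 0\<^sub>v ?d"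
      and Lx: "\<forall>i\<in>mesh N. LN_op n m nu ny A B C D \<tau> \<theta> N \<xi> x i = lam \<cdot>\<^sub>v x i"
      by blast
    obtain k where k: "k < ?d" "x i0 $ k \<noteq> 0"
      using i0 x by (auto simp: vec_eq_iff)
    then have "flatten_mesh ?d N x \<noteq> 0\<^sub>v ?K"
      using flatten_mesh_index[OF i0(1) k(1), of x] flat_index_less[OF i0(1) k(1)] by (auto simp: vec_eq_iff)
    moreover have "flatten_mesh ?d N x \<in> carrier_vec ?K"
      by (simp add: flatten_mesh_def)
    ultimately show "eigenvalue ?L lam"
      unfolding eigenvalue_def eigenvector_def dimL using LN_mat_flatten_eigen[OF inj \<open>n > 0\<close> A B C x Lx]
      by blast
  qed
qed

lemma pN_prop_pN: "\<exists>!p. pN_prop \<theta> N lam p \<Longrightarrow> pN_prop \<theta> N lam (pN \<theta> N lam)"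
  unfolding pN_def by (rule theI')

lemma eq_0_if_pN_homogeneous:
  assumes ex: "\<exists>!p. pN_prop \<theta> N lam p" and "degree q \<le> 2*N" and "poly q 0 = 0"
    and "\<forall>i\<in>mesh N - {0}. poly (pderiv q) (complex_of_real (\<theta> i)) = lam * poly q (complex_of_real (\<theta> i))"
  shows "q = 0"
proof -
  let ?p = "pN \<theta> N lam"
  have p: "pN_prop \<theta> N lam ?p"
    using ex by (rule pN_prop_pN)
  then have "pN_prop \<theta> N lam (?p + q)"
    using assms(2-4) unfolding pN_prop_def
    by (auto simp: pderiv_add distrib_left intro: order_trans[OF degree_add_le_max])
  then have "?p + q = ?p"
    using ex p by blast
  then show ?thesis
    by simp
qed

lemma interp_poly_eq_smult_pN:
  assumes inj: "inj_on \<theta> (mesh N)" and "\<theta> 0 = 0" and ex: "\<exists>!p. pN_prop \<theta> N lam p"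
    and deriv: "\<forall>i\<in>mesh N - {0}. poly (pderiv (interp_poly \<theta> N f)) (complex_of_real (\<theta> i)) = lam * f i"
  shows "interp_poly \<theta> N f = smult (f 0) (pN \<theta> N lam)"
proof -
  let ?P = "interp_poly \<theta> N f" and ?p = "pN \<theta> N lam"
  have p: "degree ?p \<le> 2*N" "poly ?p 0 = 1"
    "\<forall>i\<in>mesh N - {0}. poly (pderiv ?p) (complex_of_real (\<theta> i)) = lam * poly ?p (complex_of_real (\<theta> i))"
    using pN_prop_pN[OF ex] unfolding pN_prop_def by auto
  have P: "poly ?P (complex_of_real (\<theta> i)) = f i" if "i \<in> mesh N" for i
    using inj that by (rule poly_interp_poly)
  have "?P - smult (f 0) ?p = 0"
  proof (rule eq_0_if_pN_homogeneous[OF ex])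
    show "degree (?P - smult (f 0) ?p) \<le> 2*N"
      using degree_interp_poly[OF inj] p(1) by (meson degree_diff_le degree_smult_le order_trans)
    show "poly (?P - smult (f 0) ?p) 0 = 0"
      using P[of 0] p(2) \<open>\<theta> 0 = 0\<close> by simp
    show "\<forall>i\<in>mesh N - {0}. poly (pderiv (?P - smult (f 0) ?p)) (complex_of_real (\<theta> i))
        = lam * poly (?P - smult (f 0) ?p) (complex_of_real (\<theta> i))"
      using deriv p(3) P by (simp add: pderiv_diff pderiv_smult algebra_simps)
  qed
  then show ?thesis
    by simp
qed

lemma pderiv_map_poly_cnj: "pderiv (map_poly cnj p) = map_poly cnj (pderiv p)"
  by (rule poly_eqI) (simp add: coeff_pderiv coeff_map_poly)

text \<open>For \<open>\<lambda> = j\<omega>\<close> and a symmetric mesh, \<open>t \<mapsto> conj (p\<^sub>N(-t))\<close> solves the same collocation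
  problem as \<open>p\<^sub>N\<close>.\<close>

lemma poly_pN_cnj_uminus:
  assumes ex: "\<exists>!p. pN_prop \<theta> N (\<i> * complex_of_real \<omega>) p"
    and sym: "\<forall>i\<in>{1..int N}. \<theta> (- i) = - \<theta> i" and "\<theta> 0 = 0"
  shows "poly (pN \<theta> N (\<i> * complex_of_real \<omega>)) (complex_of_real t)
       = cnj (poly (pN \<theta> N (\<i> * complex_of_real \<omega>)) (complex_of_real (- t)))"
proof -
  let ?lam = "\<i> * complex_of_real \<omega>"
  let ?p = "pN \<theta> N ?lam"
  have p: "pN_prop \<theta> N ?lam ?p"
    using ex by (rule pN_prop_pN)
  have sym_mesh: "\<theta> (- i) = - \<theta> i" if "i \<in> mesh N" for i
    using sym[rule_format, of i] sym[rule_format, of "- i"] \<open>\<theta> 0 = 0\<close> that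
    by (cases "i = 0"; cases "0 < i") auto
  define q where "q = map_poly cnj (?p \<circ>\<^sub>p [:0, -1:])"
  have poly_q: "poly q z = cnj (poly ?p (- cnj z))" for z
    unfolding q_def by (simp add: poly_map_poly_cnj poly_pcompose)
  have poly_pderiv_q: "poly (pderiv q) z = - cnj (poly (pderiv ?p) (- cnj z))" for z
    unfolding q_def pderiv_map_poly_cnj pderiv_pcompose
    by (simp add: poly_map_poly_cnj poly_pcompose pderiv_pCons)
  have "pN_prop \<theta> N ?lam q"
    unfolding pN_prop_def
  proof (intro conjI ballI)
    have "degree q \<le> degree (?p \<circ>\<^sub>p [:0, -1:])"
      unfolding q_def by (rule degree_map_poly_le)
    also have "\<dots> = degree ?p"
      by (simp add: degree_pcompose)
    finally show "degree q \<le> 2*N"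
      using p unfolding pN_prop_def by simp
    show "poly q 0 = 1"
      using p unfolding poly_q pN_prop_def by simp
    fix i assume i: "i \<in> mesh N - {0}"
    then have "poly (pderiv ?p) (complex_of_real (\<theta> (- i))) = ?lam * poly ?p (complex_of_real (\<theta> (- i)))"
      using p unfolding pN_prop_def by auto
    then show "poly (pderiv q) (complex_of_real (\<theta> i)) = ?lam * poly q (complex_of_real (\<theta> i))"
      using sym_mesh[of i] i unfolding poly_pderiv_q poly_q by simp
  qed
  then have "q = ?p"
    using ex p by blast
  then show ?thesis
    using poly_q[of "complex_of_real (- t)"] by simp
qed

section \<open>Reduction to a \<open>2n \<times> 2n\<close> eigenvalue problem\<close>

text \<open>The paper's \<open>M\<^sub>0 + \<Sum>\<^sub>i (p(-\<tau>\<^sub>i) M\<^sub>i + p(\<tau>\<^sub>i) M\<^sub>-\<^sub>i)\<close>: on the profiles \<open>x\<^sub>i = p(\<theta>\<^sub>i) v\<close>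
  the node-\<open>0\<close> row of \<open>L\<^sub>N\<close> acts on \<open>v\<close> through this matrix.\<close>

definition HN_mat :: "nat \<Rightarrow> nat \<Rightarrow> nat \<Rightarrow> nat \<Rightarrow> (nat \<Rightarrow> real mat) \<Rightarrow> real mat \<Rightarrow> real mat \<Rightarrow> real mat
    \<Rightarrow> (nat \<Rightarrow> real) \<Rightarrow> real \<Rightarrow> complex poly \<Rightarrow> complex mat" where
  "HN_mat n m nu ny A B C D \<tau> \<xi> p = cmat (M0 nu ny (A 0) B C D \<xi>)
     + msum (2*n) (\<lambda>l. poly p (complex_of_real (- \<tau> l)) \<cdot>\<^sub>m cmat (Mplus n (A l))
                     + poly p (complex_of_real (\<tau> l)) \<cdot>\<^sub>m cmat (Mminus n (A l))) {1..m}"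

lemma HN_mat_carrier: "HN_mat n m nu ny A B C D \<tau> \<xi> p \<in> carrier_mat (2*n) (2*n)"
  unfolding HN_mat_def msum_def by auto

lemma LN_op_profile:
  assumes profile: "\<forall>k<2*n. interp_poly \<theta> N (\<lambda>i. x i $ k) = smult (v $ k) p"
    and v: "v \<in> carrier_vec (2*n)" and "poly p 0 = 1"
    and A: "\<forall>i\<in>{0..m}. A i \<in> carrier_mat n n" and B: "B \<in> carrier_mat n nu" and C: "C \<in> carrier_mat ny n"
  shows "LN_op n m nu ny A B C D \<tau> \<theta> N \<xi> x 0 = HN_mat n m nu ny A B C D \<tau> \<xi> p *\<^sub>v v"
    and "i \<noteq> 0 \<Longrightarrow> LN_op n m nu ny A B C D \<tau> \<theta> N \<xi> x i = poly (pderiv p) (complex_of_real (\<theta> i)) \<cdot>\<^sub>v v"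
proof -
  have PN: "PN \<theta> N (2*n) x t = poly p (complex_of_real t) \<cdot>\<^sub>v v" for t
    using profile v by (intro eq_vecI) (auto simp: PN_def)
  have PN_deriv: "PN_deriv \<theta> N (2*n) x t = poly (pderiv p) (complex_of_real t) \<cdot>\<^sub>v v" for t
    using profile v by (intro eq_vecI) (auto simp: PN_deriv_def pderiv_smult)
  have Al: "A l \<in> carrier_mat n n" if "l \<in> {0..m}" for l
    using A that by blast
  have M0: "cmat (M0 nu ny (A 0) B C D \<xi>) \<in> carrier_mat (2*n) (2*n)"
    using M0_carrier[OF Al B C] by simp
  have "HN_mat n m nu ny A B C D \<tau> \<xi> p *\<^sub>v v = cmat (M0 nu ny (A 0) B C D \<xi>) *\<^sub>v v
      + vsum (2*n) (\<lambda>l. (poly p (complex_of_real (- \<tau> l)) \<cdot>\<^sub>m cmat (Mplus n (A l))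
                     + poly p (complex_of_real (\<tau> l)) \<cdot>\<^sub>m cmat (Mminus n (A l))) *\<^sub>v v) {1..m}"
  proof -
    have "\<forall>l\<in>{1..m}. poly p (complex_of_real (- \<tau> l)) \<cdot>\<^sub>m cmat (Mplus n (A l))
        + poly p (complex_of_real (\<tau> l)) \<cdot>\<^sub>m cmat (Mminus n (A l)) \<in> carrier_mat (2*n) (2*n)"
      using Al Mplus_carrier Mminus_carrier by auto
    then show ?thesis
      unfolding HN_mat_def using M0 v
      by (subst add_mult_distrib_mat_vec[of _ "2*n" "2*n"]) (auto simp: msum_mult_vec, simp add: msum_def)
  qed
  also have "\<dots> = LN_op n m nu ny A B C D \<tau> \<theta> N \<xi> x 0"
  proof -
    have "(a \<cdot>\<^sub>m cmat (Mplus n (A l)) + b \<cdot>\<^sub>m cmat (Mminus n (A l))) *\<^sub>v v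
        = cmat (Mplus n (A l)) *\<^sub>v (a \<cdot>\<^sub>v v) + cmat (Mminus n (A l)) *\<^sub>v (b \<cdot>\<^sub>v v)"
      if "l \<in> {0..m}" for l a b
      using Mplus_carrier[OF Al[OF that]] Mminus_carrier[OF Al[OF that]] v
      by (simp add: add_mult_distrib_mat_vec[of _ "2*n" "2*n"] smult_mult_mat_vec mult_mat_vec[of _ "2*n" "2*n"])
    then show ?thesis
      unfolding LN_op_def PN vsum_def using \<open>poly p 0 = 1\<close> v by simp
  qed
  finally show "LN_op n m nu ny A B C D \<tau> \<theta> N \<xi> x 0 = HN_mat n m nu ny A B C D \<tau> \<xi> p *\<^sub>v v" ..
  show "i \<noteq> 0 \<Longrightarrow> LN_op n m nu ny A B C D \<tau> \<theta> N \<xi> x i = poly (pderiv p) (complex_of_real (\<theta> i)) \<cdot>\<^sub>v v"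
    unfolding LN_op_def PN_deriv by simp
qed

lemma interp_poly_eigenvector_component:
  assumes inj: "inj_on \<theta> (mesh N)" and "\<theta> 0 = 0" and ex: "\<exists>!p. pN_prop \<theta> N lam p"
    and x: "\<forall>i\<in>mesh N. x i \<in> carrier_vec (2*n)"
    and Lx: "\<forall>i\<in>mesh N. LN_op n m nu ny A B C D \<tau> \<theta> N \<xi> x i = lam \<cdot>\<^sub>v x i"
    and k: "k < 2*n"
  shows "interp_poly \<theta> N (\<lambda>i. x i $ k) = smult (x 0 $ k) (pN \<theta> N lam)"
proof (rule interp_poly_eq_smult_pN[OF inj \<open>\<theta> 0 = 0\<close> ex], intro ballI)
  fix i assume i: "i \<in> mesh N - {0}"
  have "poly (pderiv (interp_poly \<theta> N (\<lambda>i. x i $ k))) (complex_of_real (\<theta> i))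
      = LN_op n m nu ny A B C D \<tau> \<theta> N \<xi> x i $ k"
    using i k by (simp add: LN_op_def PN_deriv_def)
  also have "\<dots> = lam * x i $ k"
    using Lx x[rule_format, of i] i k by simp
  finally show "poly (pderiv (interp_poly \<theta> N (\<lambda>i. x i $ k))) (complex_of_real (\<theta> i)) = lam * x i $ k" .
qed

lemma LN_op_eigen_profile:
  assumes inj: "inj_on \<theta> (mesh N)" and "\<theta> 0 = 0" and ex: "\<exists>!p. pN_prop \<theta> N lam p"
    and A: "\<forall>i\<in>{0..m}. A i \<in> carrier_mat n n" and B: "B \<in> carrier_mat n nu" and C: "C \<in> carrier_mat ny n"
    and v: "v \<in> carrier_vec (2*n)" and Hv: "HN_mat n m nu ny A B C D \<tau> \<xi> (pN \<theta> N lam) *\<^sub>v v = lam \<cdot>\<^sub>v v"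
    and i: "i \<in> mesh N"
  defines "x \<equiv> \<lambda>i. poly (pN \<theta> N lam) (complex_of_real (\<theta> i)) \<cdot>\<^sub>v v"
  shows "LN_op n m nu ny A B C D \<tau> \<theta> N \<xi> x i = lam \<cdot>\<^sub>v x i"
proof -
  let ?p = "pN \<theta> N lam"
  have p: "degree ?p \<le> 2*N" "poly ?p 0 = 1"
    "\<forall>i\<in>mesh N - {0}. poly (pderiv ?p) (complex_of_real (\<theta> i)) = lam * poly ?p (complex_of_real (\<theta> i))"
    using pN_prop_pN[OF ex] unfolding pN_prop_def by auto
  have profile: "\<forall>k<2*n. interp_poly \<theta> N (\<lambda>i. x i $ k) = smult (v $ k) ?p"
    using v p(1) by (auto intro!: interp_poly_eqI[OF inj] order_trans[OF degree_smult_le] simp: x_def)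
  show ?thesis
  proof (cases "i = 0")
    case True
    then show ?thesis
      using LN_op_profile(1)[OF profile v p(2) A B C] Hv p(2) \<open>\<theta> 0 = 0\<close> v by (simp add: x_def)
  next
    case False
    have "LN_op n m nu ny A B C D \<tau> \<theta> N \<xi> x i = poly (pderiv ?p) (complex_of_real (\<theta> i)) \<cdot>\<^sub>v v"
      by (rule LN_op_profile(2)[OF profile v p(2) A B C False])
    then show ?thesis
      using p(3) i False by (simp add: x_def smult_smult_assoc)
  qed
qed

lemma eigenvalue_LN_mat_iff_HN_mat:
  assumes inj: "inj_on \<theta> (mesh N)" and "n > 0" and "\<theta> 0 = 0" and ex: "\<exists>!p. pN_prop \<theta> N lam p"
    and A: "\<forall>i\<in>{0..m}. A i \<in> carrier_mat n n" and B: "B \<in> carrier_mat n nu" and C: "C \<in> carrier_mat ny n"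
  shows "eigenvalue (LN_mat n m nu ny A B C D \<tau> \<theta> N \<xi>) lam
     \<longleftrightarrow> eigenvalue (HN_mat n m nu ny A B C D \<tau> \<xi> (pN \<theta> N lam)) lam"
proof -
  let ?p = "pN \<theta> N lam" and ?d = "2*n"
  let ?H = "HN_mat n m nu ny A B C D \<tau> \<xi> ?p" and ?op = "LN_op n m nu ny A B C D \<tau> \<theta> N \<xi>"
  have dimH: "dim_row ?H = ?d"
    using HN_mat_carrier by (rule carrier_matD)
  show ?thesis
    unfolding eigenvalue_LN_mat_iff[OF inj \<open>n > 0\<close> A B C]
  proof
    assume "\<exists>x. (\<forall>i\<in>mesh N. x i \<in> carrier_vec ?d) \<and> (\<exists>i\<in>mesh N. x i \<noteq> 0\<^sub>v ?d)
        \<and> (\<forall>i\<in>mesh N. ?op x i = lam \<cdot>\<^sub>v x i)"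
    then obtain x i0 where x: "\<forall>i\<in>mesh N. x i \<in> carrier_vec ?d" and i0: "i0 \<in> mesh N" "x i0 \<noteq> 0\<^sub>v ?d"
      and Lx: "\<forall>i\<in>mesh N. ?op x i = lam \<cdot>\<^sub>v x i"
      by blast
    note profile = interp_poly_eigenvector_component[OF inj \<open>\<theta> 0 = 0\<close> ex x Lx]
    have p0: "poly ?p 0 = 1"
      using pN_prop_pN[OF ex] by (simp add: pN_prop_def)
    have "x 0 \<noteq> 0\<^sub>v ?d"
    proof
      assume x0: "x 0 = 0\<^sub>v ?d"
      have "x i0 $ k = poly (interp_poly \<theta> N (\<lambda>i. x i $ k)) (complex_of_real (\<theta> i0))" for k
        using poly_interp_poly[OF inj i0(1)] by simp
      then have "x i0 = 0\<^sub>v ?d"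
        using x i0(1) by (intro eq_vecI) (auto simp: profile x0)
      then show False
        using i0(2) by contradiction
    qed
    moreover have "?H *\<^sub>v x 0 = lam \<cdot>\<^sub>v x 0"
      using LN_op_profile(1)[OF _ _ p0 A B C, where x = x and v = "x 0" and \<theta> = \<theta> and N = N]
        profile x Lx[rule_format, of 0] by simp
    ultimately show "eigenvalue ?H lam"
      unfolding eigenvalue_def eigenvector_def dimH using x by auto
  next
    assume "eigenvalue ?H lam"
    then obtain v where v: "v \<in> carrier_vec ?d" "v \<noteq> 0\<^sub>v ?d" and Hv: "?H *\<^sub>v v = lam \<cdot>\<^sub>v v"
      unfolding eigenvalue_def eigenvector_def dimH by blast
    let ?x = "\<lambda>i. poly ?p (complex_of_real (\<theta> i)) \<cdot>\<^sub>v v"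
    have "?x 0 = v"
      using pN_prop_pN[OF ex] \<open>\<theta> 0 = 0\<close> v by (simp add: pN_prop_def)
    then show "\<exists>x. (\<forall>i\<in>mesh N. x i \<in> carrier_vec ?d) \<and> (\<exists>i\<in>mesh N. x i \<noteq> 0\<^sub>v ?d)
        \<and> (\<forall>i\<in>mesh N. ?op x i = lam \<cdot>\<^sub>v x i)"
      using LN_op_eigen_profile[OF inj \<open>\<theta> 0 = 0\<close> ex A B C v(1) Hv] v by (intro exI[of _ ?x]) force
  qed
qed

lemma KN_carrier: "KN n m A \<tau> \<theta> N \<omega> \<in> carrier_mat n n"
  unfolding KN_def msum_def by auto

lemma index_KN:
  assumes "\<forall>i\<in>{0..m}. A i \<in> carrier_mat n n" "i < n" "j < n"
  shows "KN n m A \<tau> \<theta> N \<omega> $$ (i, j) = (if i = j then \<i> * complex_of_real \<omega> else 0)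
    - complex_of_real (A 0 $$ (i, j))
    - (\<Sum>l\<in>{1..m}. poly (pN \<theta> N (\<i> * complex_of_real \<omega>)) (complex_of_real (- \<tau> l)) * complex_of_real (A l $$ (i, j)))"
proof -
  have "dim_row (A l) = n" "dim_col (A l) = n" if "l \<in> {0..m}" for l
    using assms(1) that by auto
  then show ?thesis
    using assms(2,3) by (simp add: KN_def msum_def)
qed

lemma char_matrix_HN_mat:
  fixes \<omega> \<xi> :: real and D :: "real mat" and nu ny :: nat
  defines "lam \<equiv> \<i> * complex_of_real \<omega>"
  defines "X \<equiv> minv (Dxi nu D \<xi>)" and "Y \<equiv> minv (Dtxi ny D \<xi>)"
  assumes A: "\<forall>i\<in>{0..m}. A i \<in> carrier_mat n n"
    and B: "B \<in> carrier_mat n nu" and C: "C \<in> carrier_mat ny n" and D: "D \<in> carrier_mat ny nu"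
    and X: "X \<in> carrier_mat nu nu" and Y: "Y \<in> carrier_mat ny ny"
    and sym: "\<forall>l\<in>{1..m}. poly (pN \<theta> N lam) (complex_of_real (\<tau> l)) = cnj (poly (pN \<theta> N lam) (complex_of_real (- \<tau> l)))"
  shows "char_matrix (HN_mat n m nu ny A B C D \<tau> \<xi> (pN \<theta> N lam)) lam = four_block_mat
      (- (KN n m A \<tau> \<theta> N \<omega> + cmat B * cmat X * mat_adjoint (cmat D) * cmat C))
      (- (cmat B * cmat X * mat_adjoint (cmat B)))
      (complex_of_real (\<xi>^2) \<cdot>\<^sub>m (mat_adjoint (cmat C) * cmat Y * cmat C))
      (mat_adjoint (KN n m A \<tau> \<theta> N \<omega>) + mat_adjoint (cmat C) * cmat D * cmat X * mat_adjoint (cmat B))"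
proof -
  have Al: "A l \<in> carrier_mat n n" if "l \<in> {0..m}" for l
    using A that by blast
  have DT: "transpose_mat D \<in> carrier_mat nu ny" and BT: "transpose_mat B \<in> carrier_mat nu n"
    and CT: "transpose_mat C \<in> carrier_mat n ny"
    using B C D by auto
  have prods: "cmat B * cmat X * mat_adjoint (cmat D) * cmat C = cmat (B * X * transpose_mat D * C)"
    "cmat B * cmat X * mat_adjoint (cmat B) = cmat (B * X * transpose_mat B)"
    "mat_adjoint (cmat C) * cmat Y * cmat C = cmat (transpose_mat C * Y * C)"
    "mat_adjoint (cmat C) * cmat D * cmat X * mat_adjoint (cmat B) = cmat (transpose_mat C * D * X * transpose_mat B)"
    by (simp_all only: cmat_mult4[OF B X DT C] cmat_mult3[OF B X BT] cmat_mult3[OF CT Y C]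
        cmat_mult4[OF CT D X BT] mat_adjoint_cmat)
  note dims = carrier_matD[OF B] carrier_matD[OF C] carrier_matD[OF D] carrier_matD[OF X] carrier_matD[OF Y]
    carrier_matD[OF Al]
  have "char_matrix (HN_mat n m nu ny A B C D \<tau> \<xi> (pN \<theta> N lam)) lam = four_block_mat
      (- (KN n m A \<tau> \<theta> N \<omega> + cmat (B * X * transpose_mat D * C))) (- cmat (B * X * transpose_mat B))
      (complex_of_real (\<xi>^2) \<cdot>\<^sub>m cmat (transpose_mat C * Y * C))
      (mat_adjoint (KN n m A \<tau> \<theta> N \<omega>) + cmat (transpose_mat C * D * X * transpose_mat B))"
    (is "?L = ?R")
  proof (rule eq_matI)
    fix i j assume "i < dim_row ?R" and "j < dim_col ?R"
    then have ij: "i < n + n" "j < n + n"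
      using dims by (simp_all add: KN_def msum_def)
    consider "i < n" "j < n" | "i < n" "n \<le> j" | "n \<le> i" "j < n" | "n \<le> i" "n \<le> j"
      by linarith
    then show "?L $$ (i, j) = ?R $$ (i, j)"
    proof cases
      case 1
      then show ?thesis
        using ij dims by (simp add: char_matrix_def HN_mat_def M0_def Mplus_def Mminus_def KN_def msum_def lam_def X_def)
    next
      case 2
      then show ?thesis
        using ij dims by (simp add: char_matrix_def HN_mat_def M0_def Mplus_def Mminus_def KN_def msum_def X_def)
    next
      case 3
      then show ?thesis
        using ij dims by (simp add: char_matrix_def HN_mat_def M0_def Mplus_def Mminus_def KN_def msum_def Y_def)
    next
      case 4
      have "mat_adjoint (KN n m A \<tau> \<theta> N \<omega>) $$ (i - n, j - n) = cnj (KN n m A \<tau> \<theta> N \<omega> $$ (j - n, i - n))"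
        using ij 4 KN_carrier[of n m A \<tau> \<theta> N \<omega>] by auto
      moreover have "j - n = i - n \<longleftrightarrow> i = j"
        using 4 by arith
      ultimately show ?thesis
        using ij dims 4 sym by (simp add: char_matrix_def HN_mat_def M0_def Mplus_def Mminus_def msum_def index_KN[OF A]
            lam_def X_def sum_negf)
    qed
  qed (simp_all add: char_matrix_def HN_mat_def msum_def KN_def dims)
  then show ?thesis
    unfolding prods .
qed

lemma Dxi_carrier: "D \<in> carrier_mat ny nu \<Longrightarrow> Dxi nu D \<xi> \<in> carrier_mat nu nu"
  unfolding Dxi_def by auto

lemma Dtxi_carrier: "D \<in> carrier_mat ny nu \<Longrightarrow> Dtxi ny D \<xi> \<in> carrier_mat ny ny"
  unfolding Dtxi_def by auto

lemma Dxi_char_matrix: "D \<in> carrier_mat ny nu \<Longrightarrow> Dxi nu D \<xi> = char_matrix (transpose_mat D * D) (\<xi>^2)"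
  unfolding Dxi_def char_matrix_def by (intro eq_matI) auto

lemma Dtxi_char_matrix: "D \<in> carrier_mat ny nu \<Longrightarrow> Dtxi ny D \<xi> = char_matrix (D * transpose_mat D) (\<xi>^2)"
  unfolding Dtxi_def char_matrix_def by (intro eq_matI) auto

lemma det_Dtxi_neq_0:
  assumes D: "D \<in> carrier_mat ny nu" and "\<xi> \<noteq> 0" and "det (Dxi nu D \<xi>) \<noteq> 0"
  shows "det (Dtxi ny D \<xi>) \<noteq> 0"
proof
  have DDT: "D * transpose_mat D \<in> carrier_mat ny ny" and DTD: "transpose_mat D * D \<in> carrier_mat nu nu"
    using D by auto
  assume "det (Dtxi ny D \<xi>) = 0"
  then have "eigenvalue (D * transpose_mat D) (\<xi>^2)"
    unfolding eigenvalue_det[OF DDT] Dtxi_char_matrix[OF D, symmetric] .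
  then have "eigenvalue (transpose_mat D * D) (\<xi>^2)"
    using \<open>\<xi> \<noteq> 0\<close> by (intro eigenvalue_mult_swap[OF D transpose_carrier_mat[THEN iffD2, OF D]]) simp_all
  then show False
    using \<open>det (Dxi nu D \<xi>) \<noteq> 0\<close> unfolding eigenvalue_det[OF DTD] Dxi_char_matrix[OF D, symmetric] by blast
qed

lemma D_minv_Dxi_transpose:
  assumes D: "D \<in> carrier_mat ny nu" and "det (Dxi nu D \<xi>) \<noteq> 0" and "det (Dtxi ny D \<xi>) \<noteq> 0"
  shows "D * minv (Dxi nu D \<xi>) * transpose_mat D = 1\<^sub>m ny + \<xi>^2 \<cdot>\<^sub>m minv (Dtxi ny D \<xi>)"
proof -
  let ?Dx = "Dxi nu D \<xi>" and ?Dt = "Dtxi ny D \<xi>"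
  have Dx: "?Dx \<in> carrier_mat nu nu" and Dt: "?Dt \<in> carrier_mat ny ny"
    using D by (rule Dxi_carrier, rule Dtxi_carrier)
  note X = minv_inverse[OF Dx \<open>det ?Dx \<noteq> 0\<close>] and Y = minv_inverse[OF Dt \<open>det ?Dt \<noteq> 0\<close>]
  have DT: "transpose_mat D \<in> carrier_mat nu ny" and DDT: "D * transpose_mat D \<in> carrier_mat ny ny"
    and DTD: "transpose_mat D * D \<in> carrier_mat nu nu" and I: "\<xi>^2 \<cdot>\<^sub>m 1\<^sub>m ny \<in> carrier_mat ny ny"
    "\<xi>^2 \<cdot>\<^sub>m 1\<^sub>m nu \<in> carrier_mat nu nu"
    using D by auto
  have "?Dt * D = D * transpose_mat D * D - (\<xi>^2 \<cdot>\<^sub>m 1\<^sub>m ny) * D"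
    unfolding Dtxi_def by (rule minus_mult_distrib_mat[OF DDT I(1) D])
  also have "\<dots> = D * (transpose_mat D * D) - D * (\<xi>^2 \<cdot>\<^sub>m 1\<^sub>m nu)"
    using D DT mult_smult_assoc_mat[OF one_carrier_mat D] mult_smult_distrib[OF D one_carrier_mat] by simp
  also have "\<dots> = D * ?Dx"
    unfolding Dxi_def by (rule mult_minus_distrib_mat[OF D DTD I(2), symmetric])
  finally have DX: "D * minv ?Dx = minv ?Dt * D"
    by (intro mult_inverse_intertwine[OF Dt Dx D Y(3) X(3) Y(2) X(1)])
  have "D * minv ?Dx * transpose_mat D = minv ?Dt * (D * transpose_mat D)"
    unfolding DX using Y(3) D DT by simp
  also have "D * transpose_mat D = ?Dt + \<xi>^2 \<cdot>\<^sub>m 1\<^sub>m ny"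
    unfolding Dtxi_def using DDT by (intro eq_matI) auto
  also have "minv ?Dt * (?Dt + \<xi>^2 \<cdot>\<^sub>m 1\<^sub>m ny) = 1\<^sub>m ny + \<xi>^2 \<cdot>\<^sub>m minv ?Dt"
    using Y(2,3) Dt I(1) mult_smult_distrib[OF Y(3) one_carrier_mat] by (simp add: mult_add_distrib_mat[of _ ny ny])
  finally show ?thesis .
qed

lemma cmat_Dxi:
  "D \<in> carrier_mat ny nu \<Longrightarrow> cmat (Dxi nu D \<xi>) = mat_adjoint (cmat D) * cmat D - complex_of_real (\<xi>^2) \<cdot>\<^sub>m 1\<^sub>m nu"
  unfolding Dxi_def
  by (simp add: cmat_minus[of _ nu nu] cmat_mult[of _ nu ny] cmat_smult cmat_one mat_adjoint_cmat)

lemma cmat_minv_Dxi: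
  assumes D: "D \<in> carrier_mat ny nu" and "det (Dxi nu D \<xi>) \<noteq> 0" and "det (Dtxi ny D \<xi>) \<noteq> 0"
  shows "cmat (minv (Dxi nu D \<xi>)) * (mat_adjoint (cmat D) * cmat D - complex_of_real (\<xi>^2) \<cdot>\<^sub>m 1\<^sub>m nu) = 1\<^sub>m nu"
    and "(mat_adjoint (cmat D) * cmat D - complex_of_real (\<xi>^2) \<cdot>\<^sub>m 1\<^sub>m nu) * cmat (minv (Dxi nu D \<xi>)) = 1\<^sub>m nu"
    and "cmat D * cmat (minv (Dxi nu D \<xi>)) * mat_adjoint (cmat D)
       = 1\<^sub>m ny + complex_of_real (\<xi>^2) \<cdot>\<^sub>m cmat (minv (Dtxi ny D \<xi>))"
proof -
  note X = minv_inverse[OF Dxi_carrier[OF D] \<open>det (Dxi nu D \<xi>) \<noteq> 0\<close>]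
  note Y = minv_inverse[OF Dtxi_carrier[OF D] \<open>det (Dtxi ny D \<xi>) \<noteq> 0\<close>]
  show "cmat (minv (Dxi nu D \<xi>)) * (mat_adjoint (cmat D) * cmat D - complex_of_real (\<xi>^2) \<cdot>\<^sub>m 1\<^sub>m nu) = 1\<^sub>m nu"
    "(mat_adjoint (cmat D) * cmat D - complex_of_real (\<xi>^2) \<cdot>\<^sub>m 1\<^sub>m nu) * cmat (minv (Dxi nu D \<xi>)) = 1\<^sub>m nu"
    unfolding cmat_Dxi[OF D, symmetric] cmat_mult[OF X(3) Dxi_carrier[OF D], symmetric]
      cmat_mult[OF Dxi_carrier[OF D] X(3), symmetric] X(1,2) by (rule cmat_one)+
  have "cmat D * cmat (minv (Dxi nu D \<xi>)) * mat_adjoint (cmat D)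
      = cmat (D * minv (Dxi nu D \<xi>) * transpose_mat D)"
    using D X(3) by (simp only: cmat_mult3[OF D X(3) transpose_carrier_mat[THEN iffD2, OF D]] mat_adjoint_cmat)
  also have "\<dots> = 1\<^sub>m ny + complex_of_real (\<xi>^2) \<cdot>\<^sub>m cmat (minv (Dtxi ny D \<xi>))"
    using Y(3) assms by (simp add: D_minv_Dxi_transpose cmat_add[of _ ny ny] cmat_smult cmat_one)
  finally show "cmat D * cmat (minv (Dxi nu D \<xi>)) * mat_adjoint (cmat D)
       = 1\<^sub>m ny + complex_of_real (\<xi>^2) \<cdot>\<^sub>m cmat (minv (Dtxi ny D \<xi>))" .
qed

theorem theorem3:
  fixes n m nu ny N :: nat and A :: "nat \<Rightarrow> real mat" and B C D :: "real mat"
    and \<tau> :: "nat \<Rightarrow> real" and \<theta> :: "int \<Rightarrow> real" and \<xi> \<omega> :: real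
  assumes "n > 0" "m > 0" "nu > 0" "ny > 0" "N > 0"
    and "\<forall>i\<in>{0..m}. A i \<in> carrier_mat n n"
    and "B \<in> carrier_mat n nu" "C \<in> carrier_mat ny n" "D \<in> carrier_mat ny nu"
    and "\<forall>i\<in>{1..m}. \<tau> i \<ge> 0" "Max (\<tau> ` {1..m}) > 0"
    and "strict_mono_on {-int N..int N} \<theta>" "\<theta> 0 = 0"
    and "- Max (\<tau> ` {1..m}) \<le> \<theta> (- int N)" "\<theta> (int N) \<le> Max (\<tau> ` {1..m})"
    and "\<forall>i\<in>{1..int N}. \<theta> (- i) = - \<theta> i"
    and "\<xi> > 0" "det (Dxi nu D \<xi>) \<noteq> 0"
    and "\<exists>!p. pN_prop \<theta> N (\<i> * complex_of_real \<omega>) p"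
    and "det (KN n m A \<tau> \<theta> N \<omega>) \<noteq> 0"
  shows "eigenvalue (LN_mat n m nu ny A B C D \<tau> \<theta> N \<xi>) (\<i> * complex_of_real \<omega>)
     \<longleftrightarrow> singular_value (GN n m A B C D \<tau> \<theta> N \<omega>) \<xi>"
proof -
  let ?lam = "\<i> * complex_of_real \<omega>"
  let ?H = "HN_mat n m nu ny A B C D \<tau> \<xi> (pN \<theta> N ?lam)"
  have inj: "inj_on \<theta> (mesh N)"
    using assms(12) by (rule strict_mono_on_imp_inj_on)
  have sym: "\<forall>l\<in>{1..m}. poly (pN \<theta> N ?lam) (complex_of_real (\<tau> l))
      = cnj (poly (pN \<theta> N ?lam) (complex_of_real (- \<tau> l)))"
    using poly_pN_cnj_uminus[OF assms(19,16,13)] by blast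
  have "det (Dtxi ny D \<xi>) \<noteq> 0"
    using det_Dtxi_neq_0[OF assms(9) _ assms(18)] assms(17) by simp
  note X = minv_inverse[OF Dxi_carrier[OF assms(9)] assms(18)]
    and Y = minv_inverse[OF Dtxi_carrier[OF assms(9)] this]
    and K = minv_inverse[OF KN_carrier assms(20)]
    and XD = cmat_minv_Dxi[OF assms(9,18) this]
  have "eigenvalue (LN_mat n m nu ny A B C D \<tau> \<theta> N \<xi>) ?lam \<longleftrightarrow> eigenvalue ?H ?lam"
    by (rule eigenvalue_LN_mat_iff_HN_mat[OF inj assms(1,13,19,6-8)])
  also have "\<dots> \<longleftrightarrow> (\<exists>v. v \<in> carrier_vec (2*n) \<and> v \<noteq> 0\<^sub>v (2*n) \<and> char_matrix ?H ?lam *\<^sub>v v = 0\<^sub>v (2*n))"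
    by (rule eigenvalue_char_matrix[OF HN_mat_carrier])
  also have "\<dots> \<longleftrightarrow> eigenvalue (mat_adjoint (GN n m A B C D \<tau> \<theta> N \<omega>) * GN n m A B C D \<tau> \<theta> N \<omega>)
      (complex_of_real (\<xi>^2))"
    unfolding char_matrix_HN_mat[OF assms(6-9) X(3) Y(3) sym] GN_def
    using assms(7-9) X(3) Y(3)
    by (intro hamiltonian_singular_iff_eigenvalue[OF KN_carrier K(3) K(1,2) _ _ _ _ _ XD]) simp_all
  also have "\<dots> \<longleftrightarrow> singular_value (GN n m A B C D \<tau> \<theta> N \<omega>) \<xi>"
    using assms(17) by (simp add: singular_value_def)
  finally show ?thesis .
qed

end
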